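(* Let $S$ be an $E$-unitary inverse semigroup, $A$ a semilattice of groups and $\Lambda=(\alpha,\lambda,f)$ a Sieben twisted $S$-module structure on $A$. Define, for $x\in\mathcal G(S)$: $D_x=\bigsqcup_{s\in x}A_{\alpha(ss^{-1})}$; $\theta_x:D_{x^{-1}}\to D_x$ by $\theta_x(a)=\lambda_s(a)$, where $s\in x$ is the unique element with $\alpha(s^{-1}s)=aa^{-1}$; and for $x,y\in\mathcal G(S)$ the pair $w_{x,y}$ of maps on $D_xD_{xy}$ by $w_{x,y}a=f(s,s^{-1}t)a$, $aw_{x,y}=af(s,s^{-1}t)$, where $s\in x$, $t\in xy$ are the unique elements with $\alpha(ss^{-1})=\alpha(tt^{-1})=aa^{-1}$. Then $\Theta=(\theta,w)$ is a twisted partial action of $\mathcal G(S)$ on $A$. Moreover, the crossed products $A*_\Lambda S$ and $A*_\Theta\mathcal G(S)$ are equivalent as extensions of $A$ by $\mathcal G(S)$.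
   Context: A semilattice of groups is an inverse semigroup $A$ with central idempotents; $A_e=\{a: aa^{-1}=a^{-1}a=e\}$. $\sigma$ is the minimum group congruence on $S$, $\mathcal G(S)=S/\sigma$ (elements are $\sigma$-classes), $\sigma^\natural$ the quotient map; $E$-unitary means $e\le s$, $e\in E(S)$ imply $s\in E(S)$. Relatively invertible endomorphism $\varphi$ of $A$: there are $\bar\varphi\in\mathrm{End}\,A$, $e_\varphi\in E(A)$ with $\bar\varphi\varphi(a)=e_\varphi a$, $\varphi\bar\varphi(a)=\varphi(e_\varphi)a$, $e_\varphi$ the identity of $\bar\varphi(A)$, $\varphi(e_\varphi)$ the identity of $\varphi(A)$. A twisted $S$-module structure is $(\alpha,\lambda,f)$ with $\alpha:E(S)\to E(A)$ an isomorphism, $\lambda_s$ relatively invertible endomorphisms, $f(s,t)\in A_{\alpha(stt^{-1}s^{-1})}$, and (i) $\lambda_e(a)=\alpha(e)a$; (ii) $\lambda_s(\alpha(e))=\alpha(ses^{-1})$; (iii) $\lambda_s\lambda_t(a)=f(s,t)\lambda_{st}(a)f(s,t)^{-1}$; (iv) $f(se,e)=\alpha(ses^{-1})$, $f(e,es)=\alpha(ess^{-1})$; (v) $\lambda_s(f(t,u))f(s,tu)=f(s,t)f(st,u)$; Sieben: additionally $f(s,e)=\alpha(ses^{-1})$, $f(e,s)=\alpha(ess^{-1})$ ($e\in E(S)$). Crossed product $A*_\Lambda S=\{a\delta_s: aa^{-1}=\alpha(ss^{-1})\}$ with $a\delta_s\cdot b\delta_t=a\lambda_s(b)f(s,t)\delta_{st}$,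 regarded as an extension of $A$ by $\mathcal G(S)$ via $a\mapsto a\delta_{\alpha^{-1}(aa^{-1})}$ and $a\delta_s\mapsto\sigma^\natural(s)$. Multipliers of a semigroup $T$: pairs $(L,R)$ of maps with $L(st)=L(s)t$, $R(st)=sR(t)$, $sL(t)=R(s)t$, written $ws=L(s)$, $sw=R(s)$; monoid $\mathcal M(T)$, unit group $\mathcal U(\mathcal M(T))$. A twisted partial action of a group $H$ on $A$ is $(\theta,w)$ with isomorphisms $\theta_x:D_{x^{-1}}\to D_x$ of nonempty ideals and $w_{x,y}\in\mathcal U(\mathcal M(D_xD_{xy}))$, such that (i) $D_x^2=D_x$, $D_xD_y=D_yD_x$; (ii) $D_1=A$, $\theta_1=\mathrm{id}$; (iii) $\theta_x(D_{x^{-1}}D_y)=D_xD_{xy}$; (iv) $\theta_x\theta_y(s)=w_{x,y}\theta_{xy}(s)w_{x,y}^{-1}$ on $D_{y^{-1}}D_{y^{-1}x^{-1}}$; (v) $w_{1,x}=w_{x,1}$ = identity of $D_x$; (vi) $\theta_x(sw_{y,z})w_{x,yz}=\theta_x(s)w_{x,y}w_{xy,z}$ on $D_{x^{-1}}D_yD_{yz}$. Crossed product $A*_\Theta H=\{a\delta_x: a\in D_x\}$ with $a\delta_x\cdot b\delta_y=\theta_x(\theta_x^{-1}(a)b)w_{x,y}\delta_{xy}$, an extension of $A$ by $H$ via $a\mapsto a\delta_1$, $a\delta_x\mapsto x$. Extensions $(U,i,j)$, $(U',i',j')$ of $A$ by a group (i.e. $i$ mono, $j$ epi, $i(A)=j^{-1}(1)$)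 are equivalent if there is an isomorphism $\mu:U\to U'$ with $\mu\circ i=i'$, $j'\circ\mu=j$. *)

theory Defs
  imports "HOL-Algebra.Group"
begin

definition inverse_semigroup :: "('s \<Rightarrow> 's \<Rightarrow> 's) \<Rightarrow> bool" where
  "inverse_semigroup m \<longleftrightarrow> (\<forall>a b c. m (m a b) c = m a (m b c)) \<and>
     (\<forall>a. \<exists>!b. m (m a b) a = a \<and> m (m b a) b = b)"

definition sinv :: "('s \<Rightarrow> 's \<Rightarrow> 's) \<Rightarrow> 's \<Rightarrow> 's" where
  "sinv m a = (THE b. m (m a b) a = a \<and> m (m b a) b = b)"

definition idems :: "('s \<Rightarrow> 's \<Rightarrow> 's) \<Rightarrow> 's set" where
  "idems m = {e. m e e = e}"

definition nat_le :: "('s \<Rightarrow> 's \<Rightarrow> 's) \<Rightarrow> 's \<Rightarrow> 's \<Rightarrow> bool" where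
  "nat_le m s t \<longleftrightarrow> (\<exists>e\<in>idems m. s = m e t)"

definition E_unitary :: "('s \<Rightarrow> 's \<Rightarrow> 's) \<Rightarrow> bool" where
  "E_unitary m \<longleftrightarrow> (\<forall>e s. e \<in> idems m \<and> nat_le m e s \<longrightarrow> s \<in> idems m)"

definition semilattice_of_groups :: "('a \<Rightarrow> 'a \<Rightarrow> 'a) \<Rightarrow> bool" where
  "semilattice_of_groups m \<longleftrightarrow> inverse_semigroup m \<and> (\<forall>e\<in>idems m. \<forall>a. m e a = m a e)"

definition Agrp :: "('a \<Rightarrow> 'a \<Rightarrow> 'a) \<Rightarrow> 'a \<Rightarrow> 'a set" where
  "Agrp m e = {a. m a (sinv m a) = e \<and> m (sinv m a) a = e}"

definition sigma :: "('s \<Rightarrow> 's \<Rightarrow> 's) \<Rightarrow> 's \<Rightarrow> 's \<Rightarrow> bool" where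
  "sigma m s t \<longleftrightarrow> (\<exists>e\<in>idems m. m e s = m e t)"

definition sigma_class :: "('s \<Rightarrow> 's \<Rightarrow> 's) \<Rightarrow> 's \<Rightarrow> 's set" where
  "sigma_class m s = {t. sigma m s t}"

definition GS :: "('s \<Rightarrow> 's \<Rightarrow> 's) \<Rightarrow> 's set monoid" where
  "GS m = \<lparr>carrier = range (sigma_class m),
           mult = (\<lambda>x y. sigma_class m (m (SOME s. s \<in> x) (SOME t. t \<in> y))),
           one = sigma_class m (SOME e. e \<in> idems m)\<rparr>"

definition endo :: "('a \<Rightarrow> 'a \<Rightarrow> 'a) \<Rightarrow> ('a \<Rightarrow> 'a) \<Rightarrow> bool" where
  "endo m \<phi> \<longleftrightarrow> (\<forall>a b. \<phi> (m a b) = m (\<phi> a) (\<phi> b))"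

definition is_identity_of :: "('a \<Rightarrow> 'a \<Rightarrow> 'a) \<Rightarrow> 'a set \<Rightarrow> 'a \<Rightarrow> bool" where
  "is_identity_of m X e \<longleftrightarrow> e \<in> X \<and> (\<forall>b\<in>X. m e b = b \<and> m b e = b)"

definition rel_inv_endo :: "('a \<Rightarrow> 'a \<Rightarrow> 'a) \<Rightarrow> ('a \<Rightarrow> 'a) \<Rightarrow> bool" where
  "rel_inv_endo m \<phi> \<longleftrightarrow> endo m \<phi> \<and>
     (\<exists>\<phi>b e. endo m \<phi>b \<and> e \<in> idems m \<and>
        (\<forall>a. \<phi>b (\<phi> a) = m e a) \<and> (\<forall>a. \<phi> (\<phi>b a) = m (\<phi> e) a) \<and>
        is_identity_of m (range \<phi>b) e \<and> is_identity_of m (range \<phi>) (\<phi> e))"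

definition twisted_module ::
  "('s \<Rightarrow> 's \<Rightarrow> 's) \<Rightarrow> ('a \<Rightarrow> 'a \<Rightarrow> 'a) \<Rightarrow> ('s \<Rightarrow> 'a) \<Rightarrow> ('s \<Rightarrow> 'a \<Rightarrow> 'a) \<Rightarrow> ('s \<Rightarrow> 's \<Rightarrow> 'a) \<Rightarrow> bool" where
  "twisted_module mS mA \<alpha> lam f \<longleftrightarrow>
     bij_betw \<alpha> (idems mS) (idems mA) \<and>
     (\<forall>e\<in>idems mS. \<forall>e'\<in>idems mS. \<alpha> (mS e e') = mA (\<alpha> e) (\<alpha> e')) \<and>
     (\<forall>s. rel_inv_endo mA (lam s)) \<and>
     (\<forall>s t. f s t \<in> Agrp mA (\<alpha> (mS (mS s t) (mS (sinv mS t) (sinv mS s))))) \<and>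
     (\<forall>e\<in>idems mS. \<forall>a. lam e a = mA (\<alpha> e) a) \<and>
     (\<forall>s. \<forall>e\<in>idems mS. lam s (\<alpha> e) = \<alpha> (mS (mS s e) (sinv mS s))) \<and>
     (\<forall>s t a. lam s (lam t a) = mA (mA (f s t) (lam (mS s t) a)) (sinv mA (f s t))) \<and>
     (\<forall>s. \<forall>e\<in>idems mS. f (mS s e) e = \<alpha> (mS (mS s e) (sinv mS s)) \<and>
                        f e (mS e s) = \<alpha> (mS (mS e s) (sinv mS s))) \<and>
     (\<forall>s t u. mA (lam s (f t u)) (f s (mS t u)) = mA (f s t) (f (mS s t) u))"

definition sieben_twisted_module ::
  "('s \<Rightarrow> 's \<Rightarrow> 's) \<Rightarrow> ('a \<Rightarrow> 'a \<Rightarrow> 'a) \<Rightarrow> ('s \<Rightarrow> 'a) \<Rightarrow> ('s \<Rightarrow> 'a \<Rightarrow> 'a) \<Rightarrow> ('s \<Rightarrow> 's \<Rightarrow> 'a) \<Rightarrow> bool" where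
  "sieben_twisted_module mS mA \<alpha> lam f \<longleftrightarrow> twisted_module mS mA \<alpha> lam f \<and>
     (\<forall>s. \<forall>e\<in>idems mS. f s e = \<alpha> (mS (mS s e) (sinv mS s)) \<and>
                        f e s = \<alpha> (mS (mS e s) (sinv mS s)))"

text \<open>Crossed product A *_Lambda S: carrier and multiplication (pairs (a,s) stand for a delta_s)\<close>
definition cpL_carrier :: "('s \<Rightarrow> 's \<Rightarrow> 's) \<Rightarrow> ('a \<Rightarrow> 'a \<Rightarrow> 'a) \<Rightarrow> ('s \<Rightarrow> 'a) \<Rightarrow> ('a \<times> 's) set" where
  "cpL_carrier mS mA \<alpha> = {(a, s). mA a (sinv mA a) = \<alpha> (mS s (sinv mS s))}"

definition cpL_mult ::
  "('s \<Rightarrow> 's \<Rightarrow> 's) \<Rightarrow> ('a \<Rightarrow> 'a \<Rightarrow> 'a) \<Rightarrow> ('s \<Rightarrow> 'a \<Rightarrow> 'a) \<Rightarrow> ('s \<Rightarrow> 's \<Rightarrow> 'a) \<Rightarrow>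
   'a \<times> 's \<Rightarrow> 'a \<times> 's \<Rightarrow> 'a \<times> 's" where
  "cpL_mult mS mA lam f u v = (case u of (a, s) \<Rightarrow> case v of (b, t) \<Rightarrow>
       (mA (mA a (lam s b)) (f s t), mS s t))"

definition cpL_i :: "('s \<Rightarrow> 's \<Rightarrow> 's) \<Rightarrow> ('a \<Rightarrow> 'a \<Rightarrow> 'a) \<Rightarrow> ('s \<Rightarrow> 'a) \<Rightarrow> 'a \<Rightarrow> 'a \<times> 's" where
  "cpL_i mS mA \<alpha> a = (a, the_inv_into (idems mS) \<alpha> (mA a (sinv mA a)))"

definition cpL_j :: "('s \<Rightarrow> 's \<Rightarrow> 's) \<Rightarrow> 'a \<times> 's \<Rightarrow> 's set" where
  "cpL_j mS u = sigma_class mS (snd u)"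

definition setmul :: "('a \<Rightarrow> 'a \<Rightarrow> 'a) \<Rightarrow> 'a set \<Rightarrow> 'a set \<Rightarrow> 'a set" where
  "setmul m X Y = {m x y | x y. x \<in> X \<and> y \<in> Y}"

definition sg_ideal :: "('a \<Rightarrow> 'a \<Rightarrow> 'a) \<Rightarrow> 'a set \<Rightarrow> bool" where
  "sg_ideal m I \<longleftrightarrow> I \<noteq> {} \<and> (\<forall>a\<in>I. \<forall>b. m a b \<in> I \<and> m b a \<in> I)"

definition iso_on :: "('a \<Rightarrow> 'a \<Rightarrow> 'a) \<Rightarrow> ('a \<Rightarrow> 'a) \<Rightarrow> 'a set \<Rightarrow> 'a set \<Rightarrow> bool" where
  "iso_on m \<theta> X Y \<longleftrightarrow> bij_betw \<theta> X Y \<and> (\<forall>a\<in>X. \<forall>b\<in>X. \<theta> (m a b) = m (\<theta> a) (\<theta> b))"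

text \<open>A multiplier of T is a pair (L,R), with w s = L s and s w = R s.\<close>
type_synonym 'a mltp = "('a \<Rightarrow> 'a) \<times> ('a \<Rightarrow> 'a)"

definition multiplier :: "('a \<Rightarrow> 'a \<Rightarrow> 'a) \<Rightarrow> 'a set \<Rightarrow> 'a mltp \<Rightarrow> bool" where
  "multiplier m T w \<longleftrightarrow> (\<forall>s\<in>T. fst w s \<in> T \<and> snd w s \<in> T) \<and>
     (\<forall>s\<in>T. \<forall>t\<in>T. fst w (m s t) = m (fst w s) t \<and> snd w (m s t) = m s (snd w t) \<and>
                     m s (fst w t) = m (snd w s) t)"

text \<open>product in M(T): (w w') s = w (w' s), s (w w') = (s w) w'\<close>
definition mltp_comp :: "'a mltp \<Rightarrow> 'a mltp \<Rightarrow> 'a mltp" where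
  "mltp_comp w w' = (fst w \<circ> fst w', snd w' \<circ> snd w)"

definition mltp_eq :: "'a set \<Rightarrow> 'a mltp \<Rightarrow> 'a mltp \<Rightarrow> bool" where
  "mltp_eq T w w' \<longleftrightarrow> (\<forall>s\<in>T. fst w s = fst w' s \<and> snd w s = snd w' s)"

definition mltp_is_inv :: "('a \<Rightarrow> 'a \<Rightarrow> 'a) \<Rightarrow> 'a set \<Rightarrow> 'a mltp \<Rightarrow> 'a mltp \<Rightarrow> bool" where
  "mltp_is_inv m T w w' \<longleftrightarrow> multiplier m T w' \<and>
     mltp_eq T (mltp_comp w w') (id, id) \<and> mltp_eq T (mltp_comp w' w) (id, id)"

definition unit_multiplier :: "('a \<Rightarrow> 'a \<Rightarrow> 'a) \<Rightarrow> 'a set \<Rightarrow> 'a mltp \<Rightarrow> bool" where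
  "unit_multiplier m T w \<longleftrightarrow> multiplier m T w \<and> (\<exists>w'. mltp_is_inv m T w w')"

definition mltp_inv :: "('a \<Rightarrow> 'a \<Rightarrow> 'a) \<Rightarrow> 'a set \<Rightarrow> 'a mltp \<Rightarrow> 'a mltp" where
  "mltp_inv m T w = (SOME w'. mltp_is_inv m T w w')"

definition twisted_partial_action ::
  "('h, 'z) monoid_scheme \<Rightarrow> ('a \<Rightarrow> 'a \<Rightarrow> 'a) \<Rightarrow> ('h \<Rightarrow> 'a set) \<Rightarrow> ('h \<Rightarrow> 'a \<Rightarrow> 'a) \<Rightarrow>
   ('h \<Rightarrow> 'h \<Rightarrow> 'a mltp) \<Rightarrow> bool" where
  "twisted_partial_action H m D \<theta> w \<longleftrightarrow> group H \<and>
     (\<forall>x\<in>carrier H. sg_ideal m (D x) \<and> iso_on m (\<theta> x) (D (inv\<^bsub>H\<^esub> x)) (D x)) \<and>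
     (\<forall>x\<in>carrier H. \<forall>y\<in>carrier H.
        unit_multiplier m (setmul m (D x) (D (x \<otimes>\<^bsub>H\<^esub> y))) (w x y)) \<and>
     (\<forall>x\<in>carrier H. setmul m (D x) (D x) = D x) \<and>
     (\<forall>x\<in>carrier H. \<forall>y\<in>carrier H. setmul m (D x) (D y) = setmul m (D y) (D x)) \<and>
     D \<one>\<^bsub>H\<^esub> = UNIV \<and> (\<forall>a. \<theta> \<one>\<^bsub>H\<^esub> a = a) \<and>
     (\<forall>x\<in>carrier H. \<forall>y\<in>carrier H.
        \<theta> x ` setmul m (D (inv\<^bsub>H\<^esub> x)) (D y) = setmul m (D x) (D (x \<otimes>\<^bsub>H\<^esub> y))) \<and>
     (\<forall>x\<in>carrier H. \<forall>y\<in>carrier H.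
        \<forall>s\<in>setmul m (D (inv\<^bsub>H\<^esub> y)) (D (inv\<^bsub>H\<^esub> y \<otimes>\<^bsub>H\<^esub> inv\<^bsub>H\<^esub> x)).
          \<theta> x (\<theta> y s) =
          snd (mltp_inv m (setmul m (D x) (D (x \<otimes>\<^bsub>H\<^esub> y))) (w x y))
              (fst (w x y) (\<theta> (x \<otimes>\<^bsub>H\<^esub> y) s))) \<and>
     (\<forall>x\<in>carrier H. mltp_eq (D x) (w \<one>\<^bsub>H\<^esub> x) (id, id) \<and> mltp_eq (D x) (w x \<one>\<^bsub>H\<^esub>) (id, id)) \<and>
     (\<forall>x\<in>carrier H. \<forall>y\<in>carrier H. \<forall>z\<in>carrier H.
        \<forall>s\<in>setmul m (setmul m (D (inv\<^bsub>H\<^esub> x)) (D y)) (D (y \<otimes>\<^bsub>H\<^esub> z)).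
          snd (w x (y \<otimes>\<^bsub>H\<^esub> z)) (\<theta> x (snd (w y z) s)) =
          snd (w (x \<otimes>\<^bsub>H\<^esub> y) z) (snd (w x y) (\<theta> x s)))"

text \<open>Crossed product A *_Theta H (pairs (a,x) stand for a delta_x)\<close>
definition cpT_carrier :: "('h, 'z) monoid_scheme \<Rightarrow> ('h \<Rightarrow> 'a set) \<Rightarrow> ('a \<times> 'h) set" where
  "cpT_carrier H D = {(a, x). x \<in> carrier H \<and> a \<in> D x}"

definition cpT_mult ::
  "('h, 'z) monoid_scheme \<Rightarrow> ('a \<Rightarrow> 'a \<Rightarrow> 'a) \<Rightarrow> ('h \<Rightarrow> 'a set) \<Rightarrow> ('h \<Rightarrow> 'a \<Rightarrow> 'a) \<Rightarrow>
   ('h \<Rightarrow> 'h \<Rightarrow> 'a mltp) \<Rightarrow> 'a \<times> 'h \<Rightarrow> 'a \<times> 'h \<Rightarrow> 'a \<times> 'h" where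
  "cpT_mult H m D \<theta> w u v = (case u of (a, x) \<Rightarrow> case v of (b, y) \<Rightarrow>
      (snd (w x y) (\<theta> x (m (the_inv_into (D (inv\<^bsub>H\<^esub> x)) (\<theta> x) a) b)), x \<otimes>\<^bsub>H\<^esub> y))"

definition cpT_i :: "('h, 'z) monoid_scheme \<Rightarrow> 'a \<Rightarrow> 'a \<times> 'h" where
  "cpT_i H a = (a, \<one>\<^bsub>H\<^esub>)"

definition cpT_j :: "'a \<times> 'h \<Rightarrow> 'h" where
  "cpT_j u = snd u"

definition equiv_ext ::
  "'u set \<Rightarrow> ('u \<Rightarrow> 'u \<Rightarrow> 'u) \<Rightarrow> ('a \<Rightarrow> 'u) \<Rightarrow> ('u \<Rightarrow> 'g) \<Rightarrow>
   'v set \<Rightarrow> ('v \<Rightarrow> 'v \<Rightarrow> 'v) \<Rightarrow> ('a \<Rightarrow> 'v) \<Rightarrow> ('v \<Rightarrow> 'g) \<Rightarrow> bool" where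
  "equiv_ext U mU i j U' mU' i' j' \<longleftrightarrow>
     (\<exists>\<mu>. bij_betw \<mu> U U' \<and> (\<forall>u\<in>U. \<forall>v\<in>U. \<mu> (mU u v) = mU' (\<mu> u) (\<mu> v)) \<and>
          (\<forall>a. \<mu> (i a) = i' a) \<and> (\<forall>u\<in>U. j' (\<mu> u) = j u))"

definition Dmap :: "('s \<Rightarrow> 's \<Rightarrow> 's) \<Rightarrow> ('a \<Rightarrow> 'a \<Rightarrow> 'a) \<Rightarrow> ('s \<Rightarrow> 'a) \<Rightarrow> 's set \<Rightarrow> 'a set" where
  "Dmap mS mA \<alpha> x = (\<Union>s\<in>x. Agrp mA (\<alpha> (mS s (sinv mS s))))"

definition thetamap ::
  "('s \<Rightarrow> 's \<Rightarrow> 's) \<Rightarrow> ('a \<Rightarrow> 'a \<Rightarrow> 'a) \<Rightarrow> ('s \<Rightarrow> 'a) \<Rightarrow> ('s \<Rightarrow> 'a \<Rightarrow> 'a) \<Rightarrow> 's set \<Rightarrow> 'a \<Rightarrow> 'a" where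
  "thetamap mS mA \<alpha> lam x a =
     lam (THE s. s \<in> x \<and> \<alpha> (mS (sinv mS s) s) = mA a (sinv mA a)) a"

definition wfactor ::
  "('s \<Rightarrow> 's \<Rightarrow> 's) \<Rightarrow> ('a \<Rightarrow> 'a \<Rightarrow> 'a) \<Rightarrow> ('s \<Rightarrow> 'a) \<Rightarrow> ('s \<Rightarrow> 's \<Rightarrow> 'a) \<Rightarrow> 's set \<Rightarrow> 's set \<Rightarrow> 'a \<Rightarrow> 'a" where
  "wfactor mS mA \<alpha> f x y a =
     (let s = (THE s. s \<in> x \<and> \<alpha> (mS s (sinv mS s)) = mA a (sinv mA a));
          t = (THE t. t \<in> (x \<otimes>\<^bsub>GS mS\<^esub> y) \<and> \<alpha> (mS t (sinv mS t)) = mA a (sinv mA a))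
      in f s (mS (sinv mS s) t))"

definition wmap ::
  "('s \<Rightarrow> 's \<Rightarrow> 's) \<Rightarrow> ('a \<Rightarrow> 'a \<Rightarrow> 'a) \<Rightarrow> ('s \<Rightarrow> 'a) \<Rightarrow> ('s \<Rightarrow> 's \<Rightarrow> 'a) \<Rightarrow> 's set \<Rightarrow> 's set \<Rightarrow> 'a mltp" where
  "wmap mS mA \<alpha> f x y =
     ((\<lambda>a. mA (wfactor mS mA \<alpha> f x y a) a), (\<lambda>a. mA a (wfactor mS mA \<alpha> f x y a)))"

end

theory Submission
  imports Defs
begin

text \<open>In an E-unitary inverse semigroup an element is determined by its \<open>\<sigma>\<close>-class together with its
  range idempotent (or its domain idempotent). Hence every \<open>a \<in> D\<^sub>x\<close> lies in \<open>A\<^bsub>\<alpha>(ss\<inverse>)\<^esub>\<close> for exactly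
  one \<open>s \<in> x\<close>, which makes \<open>\<theta>\<close> and \<open>w\<close> well defined, and each axiom of a twisted partial action
  reduces, on these unique representatives, to an axiom of the Sieben twisted module, the only extra
  ingredient being how \<open>f\<close> behaves when an argument is restricted by an idempotent. The map
  \<open>a\<delta>\<^sub>s \<mapsto> a\<delta>\<^bsub>\<sigma>(s)\<^esub>\<close> is then a bijection between the crossed products, and it is multiplicative
  because the twisting factor of \<open>a \<lambda>\<^sub>s(b)\<close> in \<open>A *\<^sub>\<Theta> \<G>(S)\<close> is \<open>f(s tt\<inverse>, s\<inverse>st) = f(s, t)\<close>.\<close>

section \<open>Inverse semigroups\<close>

locale inverse_sgrp =
  fixes m :: "'s \<Rightarrow> 's \<Rightarrow> 's" (infixl "\<cdot>" 70)
  assumes inverse_semigroup: "inverse_semigroup m"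
begin

abbreviation iv where "iv x \<equiv> sinv m x"
abbreviation E where "E \<equiv> idems m"

lemma assoc [simp]: "a \<cdot> b \<cdot> c = a \<cdot> (b \<cdot> c)"
  using inverse_semigroup unfolding inverse_semigroup_def by blast

lemma inverse_ex1: "\<exists>!b. a \<cdot> b \<cdot> a = a \<and> b \<cdot> a \<cdot> b = b"
  using inverse_semigroup unfolding inverse_semigroup_def by blast

lemma iv_regular: "a \<cdot> iv a \<cdot> a = a \<and> iv a \<cdot> a \<cdot> iv a = iv a"
  unfolding sinv_def by (rule theI'[OF inverse_ex1])

lemma mult_iv_mult [simp]: "a \<cdot> (iv a \<cdot> a) = a"
  using iv_regular by simp

lemma iv_mult_iv [simp]: "iv a \<cdot> (a \<cdot> iv a) = iv a"
  using iv_regular by simp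

lemma mult_iv_mult' [simp]: "a \<cdot> (iv a \<cdot> (a \<cdot> z)) = a \<cdot> z"
  by (metis assoc mult_iv_mult)

lemma iv_mult_iv' [simp]: "iv a \<cdot> (a \<cdot> (iv a \<cdot> z)) = iv a \<cdot> z"
  by (metis assoc iv_mult_iv)

lemma iv_unique: "a \<cdot> b \<cdot> a = a \<Longrightarrow> b \<cdot> a \<cdot> b = b \<Longrightarrow> b = iv a"
  using inverse_ex1[of a] iv_regular[of a] by blast

lemma iv_iv [simp]: "iv (iv a) = a"
  by (rule sym, rule iv_unique) simp_all

lemma idem_iff: "e \<in> E \<longleftrightarrow> e \<cdot> e = e"
  by (simp add: idems_def)

lemma idem_absorb: "e \<in> E \<Longrightarrow> e \<cdot> (e \<cdot> z) = e \<cdot> z"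
  by (metis idem_iff assoc)

lemma iv_idem: "e \<in> E \<Longrightarrow> iv e = e"
  by (rule sym, rule iv_unique) (simp_all add: idem_absorb idem_iff)

text \<open>\<open>f (ef)\<inverse> e\<close> is an inverse of \<open>ef\<close>, hence equals \<open>(ef)\<inverse>\<close>, which is therefore idempotent.\<close>
lemma idem_mult_closed:
  assumes e: "e \<in> E" and f: "f \<in> E"
  shows "e \<cdot> f \<in> E"
proof -
  define x where "x = iv (e \<cdot> f)"
  have ee: "e \<cdot> e = e" "f \<cdot> f = f" using e f by (simp_all add: idem_iff)
  have p: "e \<cdot> f \<cdot> x \<cdot> (e \<cdot> f) = e \<cdot> f" "x \<cdot> (e \<cdot> f) \<cdot> x = x"
    unfolding x_def using iv_regular[of "e \<cdot> f"] by simp_all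
  have "f \<cdot> x \<cdot> e = x"
    unfolding x_def
  proof (rule iv_unique)
    show "e \<cdot> f \<cdot> (f \<cdot> iv (e \<cdot> f) \<cdot> e) \<cdot> (e \<cdot> f) = e \<cdot> f"
      using p(1) ee unfolding x_def by (simp add: idem_absorb e f)
    show "f \<cdot> iv (e \<cdot> f) \<cdot> e \<cdot> (e \<cdot> f) \<cdot> (f \<cdot> iv (e \<cdot> f) \<cdot> e) = f \<cdot> iv (e \<cdot> f) \<cdot> e"
      using p(2) ee unfolding x_def by (simp add: idem_absorb e f) (metis assoc)
  qed
  then have xx: "x \<cdot> x = x"
    by (metis assoc p(2))
  then have "iv x = x" by (simp add: iv_idem idem_iff)
  moreover have "e \<cdot> f = iv x"
    by (rule iv_unique) (use p in simp_all)
  ultimately show ?thesis using xx by (simp add: idem_iff)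
qed

lemma idem_comm:
  assumes e: "e \<in> E" and f: "f \<in> E"
  shows "e \<cdot> f = f \<cdot> e"
proof -
  have ef: "e \<cdot> f \<in> E" and fe: "f \<cdot> e \<in> E" using idem_mult_closed e f by auto
  have ee: "e \<cdot> e = e" "f \<cdot> f = f" using e f by (simp_all add: idem_iff)
  have "f \<cdot> e = iv (e \<cdot> f)"
  proof (rule iv_unique)
    have "e \<cdot> f \<cdot> (f \<cdot> e) \<cdot> (e \<cdot> f) = (e \<cdot> f) \<cdot> (e \<cdot> f)"
      using ee by (simp add: idem_absorb e f)
    then show "e \<cdot> f \<cdot> (f \<cdot> e) \<cdot> (e \<cdot> f) = e \<cdot> f" using ef by (simp add: idem_iff)
    have "f \<cdot> e \<cdot> (e \<cdot> f) \<cdot> (f \<cdot> e) = (f \<cdot> e) \<cdot> (f \<cdot> e)"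
      using ee by (simp add: idem_absorb e f)
    then show "f \<cdot> e \<cdot> (e \<cdot> f) \<cdot> (f \<cdot> e) = f \<cdot> e" using fe by (simp add: idem_iff)
  qed
  then show ?thesis using iv_idem[OF ef] by simp
qed

lemma idem_left_commute: "e \<in> E \<Longrightarrow> f \<in> E \<Longrightarrow> e \<cdot> (f \<cdot> z) = f \<cdot> (e \<cdot> z)"
  by (metis assoc idem_comm)

lemma mult_iv_idem [simp]: "a \<cdot> iv a \<in> E"
  by (simp add: idem_iff)

lemma iv_mult_idem [simp]: "iv a \<cdot> a \<in> E"
  by (simp add: idem_iff)

lemma iv_mult: "iv (a \<cdot> b) = iv b \<cdot> iv a"
proof -
  have c: "b \<cdot> iv b \<cdot> (iv a \<cdot> a) = iv a \<cdot> a \<cdot> (b \<cdot> iv b)"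
    by (rule idem_comm) simp_all
  show ?thesis
  proof (rule sym, rule iv_unique)
    have "a \<cdot> b \<cdot> (iv b \<cdot> iv a) \<cdot> (a \<cdot> b) = a \<cdot> ((b \<cdot> iv b) \<cdot> (iv a \<cdot> a)) \<cdot> b" by simp
    also have "\<dots> = a \<cdot> b" using c by simp
    finally show "a \<cdot> b \<cdot> (iv b \<cdot> iv a) \<cdot> (a \<cdot> b) = a \<cdot> b" .
    have "iv b \<cdot> iv a \<cdot> (a \<cdot> b) \<cdot> (iv b \<cdot> iv a) = iv b \<cdot> ((iv a \<cdot> a) \<cdot> (b \<cdot> iv b)) \<cdot> iv a" by simp
    also have "\<dots> = iv b \<cdot> iv a" using c[symmetric] by simp
    finally show "iv b \<cdot> iv a \<cdot> (a \<cdot> b) \<cdot> (iv b \<cdot> iv a) = iv b \<cdot> iv a" .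
  qed
qed

lemma conj_idem: "e \<in> E \<Longrightarrow> s \<cdot> e \<cdot> iv s \<in> E"
proof -
  assume e: "e \<in> E"
  have "s \<cdot> e \<cdot> iv s \<cdot> (s \<cdot> e \<cdot> iv s) = s \<cdot> (e \<cdot> (iv s \<cdot> s) \<cdot> e) \<cdot> iv s" by simp
  also have "\<dots> = s \<cdot> ((iv s \<cdot> s) \<cdot> (e \<cdot> e)) \<cdot> iv s" using idem_comm[OF e iv_mult_idem] by simp
  also have "\<dots> = s \<cdot> e \<cdot> iv s" using e by (simp add: idem_iff)
  finally show ?thesis by (simp add: idem_iff del: assoc)
qed

lemma mult_idem_eq_conj_mult: "e \<in> E \<Longrightarrow> s \<cdot> e = s \<cdot> e \<cdot> iv s \<cdot> s"
proof -
  assume e: "e \<in> E"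
  have "s \<cdot> e \<cdot> iv s \<cdot> s = s \<cdot> (iv s \<cdot> s \<cdot> e)" using idem_comm[OF e iv_mult_idem] by simp
  then show ?thesis by simp
qed

lemma idem_mult_eq_mult_conj: "e \<in> E \<Longrightarrow> e \<cdot> t = t \<cdot> (iv t \<cdot> e \<cdot> t)"
proof -
  assume e: "e \<in> E"
  have "t \<cdot> (iv t \<cdot> e \<cdot> t) = t \<cdot> iv t \<cdot> e \<cdot> t" by simp
  also have "\<dots> = e \<cdot> (t \<cdot> iv t \<cdot> t)" using idem_comm[OF mult_iv_idem e] by simp
  finally show ?thesis by simp
qed

lemma range_mult_idem: "e \<in> E \<Longrightarrow> s \<cdot> e \<cdot> iv (s \<cdot> e) = s \<cdot> e \<cdot> iv s"
  by (simp add: iv_mult iv_idem idem_absorb)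

lemma domain_mult_idem: "e \<in> E \<Longrightarrow> iv (s \<cdot> e) \<cdot> (s \<cdot> e) = iv s \<cdot> s \<cdot> e"
proof -
  assume e: "e \<in> E"
  have "iv (s \<cdot> e) \<cdot> (s \<cdot> e) = e \<cdot> (iv s \<cdot> s) \<cdot> e" by (simp add: iv_mult iv_idem e)
  also have "\<dots> = iv s \<cdot> s \<cdot> e" using idem_comm[OF e iv_mult_idem] e by (simp add: idem_iff)
  finally show ?thesis .
qed

lemma mult_iv_domain_eq:
  assumes "iv v \<cdot> v = iv t \<cdot> t"
  shows "v \<cdot> iv t \<cdot> t = v" and "iv (v \<cdot> iv t) \<cdot> (v \<cdot> iv t) = t \<cdot> iv t"
    and "v \<cdot> iv t \<cdot> iv (v \<cdot> iv t) = v \<cdot> iv v" and "iv (v \<cdot> iv t) \<cdot> v = t"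
proof -
  have dom: "iv v \<cdot> (v \<cdot> z) = iv t \<cdot> (t \<cdot> z)" for z
    using assms by (metis assoc)
  show "v \<cdot> iv t \<cdot> t = v" by (simp add: assms[symmetric])
  show "iv (v \<cdot> iv t) \<cdot> (v \<cdot> iv t) = t \<cdot> iv t" by (simp add: iv_mult dom)
  show "v \<cdot> iv t \<cdot> iv (v \<cdot> iv t) = v \<cdot> iv v" by (simp add: iv_mult dom[symmetric])
  show "iv (v \<cdot> iv t) \<cdot> v = t" by (simp add: iv_mult assms)
qed

lemma assoc_subst: "a \<cdot> b = c \<Longrightarrow> a \<cdot> (b \<cdot> z) = c \<cdot> z"
  by (subst assoc[symmetric]) simp

lemma range_idem_mult: "g \<in> E \<Longrightarrow> g \<cdot> (s \<cdot> iv s) = g \<Longrightarrow> g \<cdot> s \<cdot> iv (g \<cdot> s) = g"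
proof -
  assume g: "g \<in> E" "g \<cdot> (s \<cdot> iv s) = g"
  have "g \<cdot> s \<cdot> iv (g \<cdot> s) = g \<cdot> (s \<cdot> iv s \<cdot> g)" by (simp add: iv_mult iv_idem g)
  also have "\<dots> = g \<cdot> (g \<cdot> (s \<cdot> iv s))" using idem_comm[OF mult_iv_idem g(1)] by simp
  also have "\<dots> = g" using g by (simp add: idem_iff)
  finally show ?thesis .
qed

lemma endo_iv:
  assumes "endo m \<phi>" shows "\<phi> (iv a) = iv (\<phi> a)"
proof (rule iv_unique)
  have h: "\<phi> (x \<cdot> y) = \<phi> x \<cdot> \<phi> y" for x y using assms by (simp add: endo_def)
  show "\<phi> a \<cdot> \<phi> (iv a) \<cdot> \<phi> a = \<phi> a" by (metis h iv_regular)
  show "\<phi> (iv a) \<cdot> \<phi> a \<cdot> \<phi> (iv a) = \<phi> (iv a)" by (metis h iv_regular)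
qed

abbreviation sg where "sg \<equiv> sigma m"

lemma sigma_iff: "sg s t \<longleftrightarrow> (\<exists>e\<in>E. e \<cdot> s = e \<cdot> t)"
  by (simp add: sigma_def)

lemma sigma_refl [simp]: "sg s s"
  unfolding sigma_iff using mult_iv_idem[of s] by blast

lemma sigma_sym: "sg s t \<Longrightarrow> sg t s"
  by (metis sigma_iff)

lemma sigma_trans: "sg s t \<Longrightarrow> sg t u \<Longrightarrow> sg s u"
proof -
  assume "sg s t" "sg t u"
  then obtain e f where e: "e \<in> E" "e \<cdot> s = e \<cdot> t" and f: "f \<in> E" "f \<cdot> t = f \<cdot> u"
    by (auto simp: sigma_iff)
  have "f \<cdot> e \<cdot> s = f \<cdot> e \<cdot> u"
    using e f by simp (metis idem_left_commute)
  then show ?thesis using idem_mult_closed[OF f(1) e(1)] unfolding sigma_iff by blast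
qed

lemma sigma_mult_right: "sg s t \<Longrightarrow> sg (s \<cdot> u) (t \<cdot> u)"
  unfolding sigma_iff by (metis assoc)

lemma sigma_mult_left: "sg s t \<Longrightarrow> sg (u \<cdot> s) (u \<cdot> t)"
proof -
  assume "sg s t"
  then obtain e where e: "e \<in> E" "e \<cdot> s = e \<cdot> t" by (auto simp: sigma_iff)
  have conj: "u \<cdot> e \<cdot> iv u \<cdot> (u \<cdot> z) = u \<cdot> (e \<cdot> z)" for z
  proof -
    have "u \<cdot> e \<cdot> iv u \<cdot> (u \<cdot> z) = u \<cdot> (e \<cdot> (iv u \<cdot> u) \<cdot> z)" by simp
    also have "\<dots> = u \<cdot> ((iv u \<cdot> u) \<cdot> e \<cdot> z)" using idem_comm[OF e(1) iv_mult_idem] by simp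
    finally show ?thesis by simp
  qed
  have "u \<cdot> e \<cdot> iv u \<cdot> (u \<cdot> s) = u \<cdot> e \<cdot> iv u \<cdot> (u \<cdot> t)" using e(2) by (simp only: conj)
  then show ?thesis using conj_idem[OF e(1), of u] unfolding sigma_iff by blast
qed

lemma sigma_mult: "sg s t \<Longrightarrow> sg s' t' \<Longrightarrow> sg (s \<cdot> s') (t \<cdot> t')"
  by (meson sigma_mult_left sigma_mult_right sigma_trans)

lemma sigma_idem_left: "e \<in> E \<Longrightarrow> sg s (e \<cdot> s)"
  unfolding sigma_iff by (metis idem_absorb)

lemma sigma_idem_right: "e \<in> E \<Longrightarrow> sg s (s \<cdot> e)"
proof -
  assume e: "e \<in> E"
  have "s \<cdot> e \<cdot> iv s \<cdot> s = s \<cdot> e" using idem_comm[OF e iv_mult_idem] by simp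
  moreover have "s \<cdot> e \<cdot> iv s \<cdot> (s \<cdot> e) = s \<cdot> e" using idem_comm[OF e iv_mult_idem] e
    by simp (metis idem_iff assoc mult_iv_mult)
  ultimately show ?thesis using conj_idem[OF e, of s] unfolding sigma_iff by (metis assoc)
qed

lemma sigma_iv: "sg s t \<Longrightarrow> sg (iv s) (iv t)"
proof -
  assume "sg s t"
  then obtain e where e: "e \<in> E" "e \<cdot> s = e \<cdot> t" by (auto simp: sigma_iff)
  have "iv (e \<cdot> s) = iv (e \<cdot> t)" using e(2) by simp
  then have r: "iv s \<cdot> e = iv t \<cdot> e" by (simp add: iv_mult iv_idem[OF e(1)])
  define g where "g = iv s \<cdot> e \<cdot> s"
  have gE: "g \<in> E" unfolding g_def using conj_idem[OF e(1), of "iv s"] by simp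
  have 1: "g \<cdot> iv s = iv s \<cdot> e"
  proof -
    have "g \<cdot> iv s = iv s \<cdot> (e \<cdot> (s \<cdot> iv s))" by (simp add: g_def)
    also have "\<dots> = iv s \<cdot> (s \<cdot> iv s \<cdot> e)" using idem_comm[OF e(1) mult_iv_idem] by simp
    finally show ?thesis by simp
  qed
  have 2: "g \<cdot> iv t = iv s \<cdot> e"
  proof -
    have "g \<cdot> iv t = iv s \<cdot> e \<cdot> (e \<cdot> s) \<cdot> iv t" using e by (simp add: g_def idem_absorb)
    also have "\<dots> = iv t \<cdot> e \<cdot> (e \<cdot> t) \<cdot> iv t" using e(2) r by (simp del: assoc)
    also have "\<dots> = iv t \<cdot> (e \<cdot> (t \<cdot> iv t))" using e by (simp add: idem_absorb)
    also have "\<dots> = iv t \<cdot> (t \<cdot> iv t \<cdot> e)" using idem_comm[OF e(1) mult_iv_idem] by simp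
    also have "\<dots> = iv t \<cdot> e" by simp
    finally show ?thesis using r by simp
  qed
  show ?thesis using gE 1 2 unfolding sigma_iff by metis
qed

end

section \<open>E-unitary inverse semigroups and their maximal group image\<close>

locale E_unitary_sgrp = inverse_sgrp +
  assumes E_unitary: "E_unitary m"
begin

lemma E_unitaryD: "e \<in> E \<Longrightarrow> f \<in> E \<Longrightarrow> f \<cdot> s = e \<Longrightarrow> s \<in> E"
  using E_unitary unfolding E_unitary_def nat_le_def by blast

lemma sigma_iv_mult_idem: "sg s t \<Longrightarrow> iv s \<cdot> t \<in> E"
proof -
  assume "sg s t"
  then obtain e where e: "e \<in> E" "e \<cdot> s = e \<cdot> t" by (auto simp: sigma_iff)
  define g where "g = iv s \<cdot> e \<cdot> t"
  have g': "g = iv s \<cdot> e \<cdot> s" using e by (simp add: g_def)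
  have gE: "g \<in> E" unfolding g' using conj_idem[OF e(1), of "iv s"] by simp
  have "g \<cdot> (iv s \<cdot> t) = iv s \<cdot> (e \<cdot> (s \<cdot> iv s) \<cdot> t)" by (simp add: g')
  also have "\<dots> = iv s \<cdot> (s \<cdot> iv s \<cdot> e \<cdot> t)" using idem_comm[OF e(1) mult_iv_idem] by simp
  also have "\<dots> = g" by (simp add: g_def)
  finally show ?thesis using E_unitaryD[OF gE gE] by blast
qed

lemma sigma_mult_iv_idem: "sg s t \<Longrightarrow> s \<cdot> iv t \<in> E"
  using sigma_iv_mult_idem[OF sigma_iv, of s t] by simp

lemma sigma_eq_if_range_eq: "sg s t \<Longrightarrow> s \<cdot> iv s = t \<cdot> iv t \<Longrightarrow> s = t"
proof -
  assume st: "sg s t" and r: "s \<cdot> iv s = t \<cdot> iv t"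
  define g where "g = iv t \<cdot> s"
  have gE: "g \<in> E" unfolding g_def using sigma_iv_mult_idem[OF sigma_sym[OF st]] .
  have h: "iv s \<cdot> t = g" using iv_idem[OF gE] by (simp add: g_def iv_mult)
  have 1: "s = t \<cdot> g"
  proof -
    have "s = s \<cdot> iv s \<cdot> s" by simp
    also have "\<dots> = t \<cdot> g" using r by (simp add: g_def del: assoc) simp
    finally show ?thesis .
  qed
  have 2: "t = s \<cdot> g"
  proof -
    have "t = t \<cdot> iv t \<cdot> t" by simp
    also have "\<dots> = s \<cdot> iv s \<cdot> t" by (simp only: r)
    also have "\<dots> = s \<cdot> g" using h by simp
    finally show ?thesis .
  qed
  have "s = s \<cdot> g" using 1 2 gE by (simp add: idem_iff)
  then show ?thesis using 2 by simp
qed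

lemma sigma_eq_if_domain_eq: "sg s t \<Longrightarrow> iv s \<cdot> s = iv t \<cdot> t \<Longrightarrow> s = t"
  using sigma_eq_if_range_eq[OF sigma_iv, of s t] by (metis iv_iv)

lemma sigma_range_mult: "sg s t \<Longrightarrow> s \<cdot> iv s \<cdot> (t \<cdot> iv t) = s \<cdot> iv t"
proof -
  assume st: "sg s t"
  define h where "h = s \<cdot> iv t"
  define k where "k = iv s \<cdot> t"
  have hE: "h \<in> E" unfolding h_def using sigma_mult_iv_idem[OF st] .
  have kE: "k \<in> E" unfolding k_def using sigma_iv_mult_idem[OF st] .
  have kk: "k = iv s \<cdot> (t \<cdot> (iv t \<cdot> s))"
  proof -
    have "k = k \<cdot> iv k" using kE iv_idem[OF kE] by (simp add: idem_iff)
    then show ?thesis by (simp add: k_def iv_mult)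
  qed
  have a: "s \<cdot> iv s \<cdot> (t \<cdot> iv t) = s \<cdot> iv s \<cdot> (t \<cdot> iv t) \<cdot> h"
  proof -
    have "s \<cdot> iv s \<cdot> (t \<cdot> iv t) = s \<cdot> k \<cdot> iv t" by (simp add: k_def)
    also have "\<dots> = s \<cdot> iv s \<cdot> (t \<cdot> iv t) \<cdot> h" by (subst kk) (simp add: h_def)
    finally show ?thesis .
  qed
  have b: "h = s \<cdot> iv s \<cdot> (t \<cdot> iv t) \<cdot> h"
  proof -
    have h1: "h = s \<cdot> iv s \<cdot> h" by (simp add: h_def)
    have h2: "h = h \<cdot> (t \<cdot> iv t)" by (simp add: h_def)
    have "h = s \<cdot> iv s \<cdot> (h \<cdot> (t \<cdot> iv t))" using h1 h2 by simp
    also have "\<dots> = s \<cdot> iv s \<cdot> (t \<cdot> iv t \<cdot> h)" using idem_comm[OF hE mult_iv_idem] by simp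
    finally show ?thesis by simp
  qed
  have "s \<cdot> iv s \<cdot> (t \<cdot> iv t) = h" using a b by metis
  then show ?thesis by (simp add: h_def del: assoc)
qed

lemma sigma_mult_iv_comm: "sg s t \<Longrightarrow> s \<cdot> iv t = t \<cdot> iv s"
proof -
  assume "sg s t"
  then have "iv (s \<cdot> iv t) = s \<cdot> iv t" by (rule iv_idem[OF sigma_mult_iv_idem])
  then show ?thesis by (simp add: iv_mult)
qed

lemma sigma_conj_domain: "sg s t \<Longrightarrow> s \<cdot> (iv t \<cdot> t) \<cdot> iv s = s \<cdot> iv t"
proof -
  assume st: "sg s t"
  have kE: "s \<cdot> iv t \<in> E" using sigma_mult_iv_idem[OF st] .
  have "s \<cdot> iv t \<cdot> iv (s \<cdot> iv t) = s \<cdot> iv t"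
    using kE iv_idem[OF kE] by (simp add: idem_iff del: assoc)
  then show ?thesis by (simp add: iv_mult)
qed

abbreviation cls where "cls s \<equiv> sigma_class m s"
abbreviation GG where "GG \<equiv> GS m"

lemma mem_sigma_class: "t \<in> cls s \<longleftrightarrow> sg s t"
  by (simp add: sigma_class_def)

lemma sigma_class_eq_iff: "cls s = cls t \<longleftrightarrow> sg s t"
  unfolding set_eq_iff mem_sigma_class by (meson sigma_refl sigma_sym sigma_trans)

lemma carrier_GS: "carrier GG = range cls"
  by (simp add: GS_def)

lemma sigma_class_in_carrier [simp]: "cls s \<in> carrier GG"
  by (simp add: carrier_GS)

lemma self_in_sigma_class [simp]: "s \<in> cls s"
  by (simp add: mem_sigma_class)

lemma carrier_GS_eq_class: "x \<in> carrier GG \<Longrightarrow> s \<in> x \<Longrightarrow> x = cls s"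
  by (metis carrier_GS sigma_class_eq_iff imageE mem_sigma_class)

lemma carrier_GS_nonempty: "x \<in> carrier GG \<Longrightarrow> \<exists>s. s \<in> x"
  by (metis carrier_GS imageE self_in_sigma_class)

lemma carrier_GS_sigma: "x \<in> carrier GG \<Longrightarrow> s \<in> x \<Longrightarrow> t \<in> x \<Longrightarrow> sg s t"
  by (metis carrier_GS_eq_class mem_sigma_class)

lemma GS_mult: "cls s \<otimes>\<^bsub>GG\<^esub> cls t = cls (s \<cdot> t)"
proof -
  have "(SOME u. u \<in> cls s) \<in> cls s" "(SOME u. u \<in> cls t) \<in> cls t"
    by (rule someI[of _ s], simp) (rule someI[of _ t], simp)
  then have "sg (s \<cdot> t) ((SOME u. u \<in> cls s) \<cdot> (SOME u. u \<in> cls t))"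
    by (intro sigma_mult) (simp_all add: mem_sigma_class)
  then have "cls ((SOME u. u \<in> cls s) \<cdot> (SOME u. u \<in> cls t)) = cls (s \<cdot> t)"
    unfolding sigma_class_eq_iff by (rule sigma_sym)
  then show ?thesis by (simp add: GS_def)
qed

lemma sigma_class_idem: "e \<in> E \<Longrightarrow> cls e = E"
proof -
  assume e: "e \<in> E"
  have "sg e t \<longleftrightarrow> t \<in> E" for t
  proof
    assume "sg e t"
    then obtain f where f: "f \<in> E" "f \<cdot> e = f \<cdot> t" by (auto simp: sigma_iff)
    then show "t \<in> E" using E_unitaryD[OF idem_mult_closed[OF f(1) e] f(1)] by simp
  next
    assume t: "t \<in> E"
    have "e \<cdot> t \<cdot> e = e \<cdot> t"
      using idem_comm[OF t e] idem_absorb[OF e] by simp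
    moreover have "e \<cdot> t \<cdot> t = e \<cdot> t"
      using t by (simp add: idem_iff)
    ultimately have "(e \<cdot> t) \<cdot> e = (e \<cdot> t) \<cdot> t" by (simp only:)
    then show "sg e t" using idem_mult_closed[OF e t] unfolding sigma_iff by blast
  qed
  then show ?thesis by (simp add: set_eq_iff mem_sigma_class)
qed

lemma GS_one: "\<one>\<^bsub>GG\<^esub> = E"
proof -
  have "(SOME e. e \<in> E) \<in> E" by (rule someI[of _ "x \<cdot> iv x"]) simp
  then show ?thesis by (simp add: GS_def sigma_class_idem)
qed

lemma sigma_class_idem_eq_one: "e \<in> E \<Longrightarrow> cls e = \<one>\<^bsub>GG\<^esub>"
  by (simp add: GS_one sigma_class_idem)

lemma group_GS: "group GG"
proof (rule groupI)
  fix x y z assume "x \<in> carrier GG" and "y \<in> carrier GG" and "z \<in> carrier GG"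
  then obtain a b c where "x = cls a" "y = cls b" "z = cls c" by (auto simp: carrier_GS)
  then show "x \<otimes>\<^bsub>GG\<^esub> y \<in> carrier GG" "x \<otimes>\<^bsub>GG\<^esub> y \<otimes>\<^bsub>GG\<^esub> z = x \<otimes>\<^bsub>GG\<^esub> (y \<otimes>\<^bsub>GG\<^esub> z)"
    by (simp_all add: GS_mult)
next
  show "\<one>\<^bsub>GG\<^esub> \<in> carrier GG" using sigma_class_idem_eq_one[OF mult_iv_idem[of x]] by (metis sigma_class_in_carrier)
next
  fix x assume "x \<in> carrier GG"
  then obtain a where a: "x = cls a" by (auto simp: carrier_GS)
  have "\<one>\<^bsub>GG\<^esub> \<otimes>\<^bsub>GG\<^esub> x = cls (a \<cdot> iv a \<cdot> a)"
    unfolding a sigma_class_idem_eq_one[OF mult_iv_idem[of a], symmetric] GS_mult by simp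
  then show "\<one>\<^bsub>GG\<^esub> \<otimes>\<^bsub>GG\<^esub> x = x" using a by simp
  have "cls (iv a) \<otimes>\<^bsub>GG\<^esub> x = \<one>\<^bsub>GG\<^esub>"
    unfolding a GS_mult using sigma_class_idem_eq_one[OF iv_mult_idem[of a]] by simp
  then show "\<exists>y\<in>carrier GG. y \<otimes>\<^bsub>GG\<^esub> x = \<one>\<^bsub>GG\<^esub>" using sigma_class_in_carrier by blast
qed

sublocale G: group GG
  by (rule group_GS)

lemma GS_inv: "inv\<^bsub>GG\<^esub> (cls s) = cls (iv s)"
  by (rule G.inv_equality) (simp_all add: GS_mult sigma_class_idem_eq_one)

lemma GS_mult_mem: "x \<in> carrier GG \<Longrightarrow> y \<in> carrier GG \<Longrightarrow> s \<in> x \<Longrightarrow> t \<in> y \<Longrightarrow> s \<cdot> t \<in> x \<otimes>\<^bsub>GG\<^esub> y"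
  by (metis GS_mult carrier_GS_eq_class self_in_sigma_class)

lemma GS_inv_mem_iff: "x \<in> carrier GG \<Longrightarrow> t \<in> inv\<^bsub>GG\<^esub> x \<longleftrightarrow> iv t \<in> x"
proof -
  assume x: "x \<in> carrier GG"
  then obtain s where s: "x = cls s" by (auto simp: carrier_GS)
  have "t \<in> inv\<^bsub>GG\<^esub> x \<longleftrightarrow> sg (iv s) t" by (simp add: s GS_inv mem_sigma_class)
  also have "\<dots> \<longleftrightarrow> sg s (iv t)" using sigma_iv[of "iv s" t] sigma_iv[of s "iv t"] by auto
  finally show ?thesis by (simp add: s mem_sigma_class)
qed

lemma GS_inv_mem: "x \<in> carrier GG \<Longrightarrow> s \<in> x \<Longrightarrow> iv s \<in> inv\<^bsub>GG\<^esub> x"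
  by (simp add: GS_inv_mem_iff)

lemma class_idem_mult_left: "x \<in> carrier GG \<Longrightarrow> s \<in> x \<Longrightarrow> e \<in> E \<Longrightarrow> e \<cdot> s \<in> x"
  by (metis carrier_GS_eq_class mem_sigma_class sigma_idem_left)

lemma class_idem_mult_right: "x \<in> carrier GG \<Longrightarrow> s \<in> x \<Longrightarrow> e \<in> E \<Longrightarrow> s \<cdot> e \<in> x"
  by (metis carrier_GS_eq_class mem_sigma_class sigma_idem_right)

lemma class_eq_if_range_eq:
  "x \<in> carrier GG \<Longrightarrow> s \<in> x \<Longrightarrow> t \<in> x \<Longrightarrow> s \<cdot> iv s = t \<cdot> iv t \<Longrightarrow> s = t"
  using carrier_GS_sigma sigma_eq_if_range_eq by blast

lemma class_eq_if_domain_eq: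
  "x \<in> carrier GG \<Longrightarrow> s \<in> x \<Longrightarrow> t \<in> x \<Longrightarrow> iv s \<cdot> s = iv t \<cdot> t \<Longrightarrow> s = t"
  using carrier_GS_sigma sigma_eq_if_domain_eq by blast

lemma class_eq_restrict:
  assumes x: "x \<in> carrier GG" and s: "s \<in> x" and s': "s' \<in> x" and g: "g \<in> E"
    and "g \<cdot> (s \<cdot> iv s) = g" and "s' \<cdot> iv s' = g"
  shows "s' = g \<cdot> s"
  by (rule class_eq_if_range_eq[OF x s' class_idem_mult_left[OF x s g]])
    (use range_idem_mult[OF g] assms(5,6) in simp)

lemma class_mult_domain_comm:
  assumes x: "x \<in> carrier GG" and s: "s \<in> x" and t: "t \<in> x"
  shows "s \<cdot> (iv t \<cdot> t) = t \<cdot> (iv s \<cdot> s)"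
proof (rule class_eq_if_domain_eq[OF x])
  show "s \<cdot> (iv t \<cdot> t) \<in> x" "t \<cdot> (iv s \<cdot> s) \<in> x"
    using class_idem_mult_right[OF x] s t by simp_all
  show "iv (s \<cdot> (iv t \<cdot> t)) \<cdot> (s \<cdot> (iv t \<cdot> t)) = iv (t \<cdot> (iv s \<cdot> s)) \<cdot> (t \<cdot> (iv s \<cdot> s))"
    unfolding domain_mult_idem[OF iv_mult_idem] using idem_comm[OF iv_mult_idem iv_mult_idem, of s t] by simp
qed

end

section \<open>Semilattices of groups\<close>

locale clifford_sgrp = inverse_sgrp +
  assumes central: "e \<in> E \<Longrightarrow> e \<cdot> a = a \<cdot> e"
begin

text \<open>\<open>eps a\<close> is the identity of the group \<open>A\<^sub>e\<close> containing \<open>a\<close>.\<close>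
definition eps where "eps a = a \<cdot> iv a"

lemma eps_in_idems [simp]: "eps a \<in> E"
  by (simp add: eps_def)

lemma central_left_commute: "e \<in> E \<Longrightarrow> e \<cdot> (a \<cdot> z) = a \<cdot> (e \<cdot> z)"
  by (metis assoc central)

lemma iv_mult_eq_eps: "iv a \<cdot> a = eps a"
proof -
  have 1: "a \<cdot> iv a = a \<cdot> iv a \<cdot> (iv a \<cdot> a)"
  proof -
    have "a \<cdot> iv a = a \<cdot> (iv a \<cdot> a) \<cdot> iv a" by simp
    also have "\<dots> = a \<cdot> iv a \<cdot> (iv a \<cdot> a)" using central[OF iv_mult_idem[of a], of "iv a"] by simp
    finally show ?thesis .
  qed
  have 2: "iv a \<cdot> a = iv a \<cdot> a \<cdot> (a \<cdot> iv a)"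
  proof -
    have "iv a \<cdot> a = iv a \<cdot> (a \<cdot> iv a) \<cdot> a" by simp
    also have "\<dots> = iv a \<cdot> a \<cdot> (a \<cdot> iv a)" using central[OF mult_iv_idem[of a], of "a"] by simp
    finally show ?thesis .
  qed
  show ?thesis using 1 2 idem_comm[OF mult_iv_idem[of a] iv_mult_idem[of a]] unfolding eps_def by metis
qed

lemma eps_left [simp]: "eps a \<cdot> a = a" by (simp add: eps_def)
lemma eps_right [simp]: "a \<cdot> eps a = a" by (simp add: iv_mult_eq_eps[symmetric])
lemma eps_left' [simp]: "eps a \<cdot> (a \<cdot> z) = a \<cdot> z" by (metis assoc eps_left)
lemma eps_right' [simp]: "a \<cdot> (eps a \<cdot> z) = a \<cdot> z" by (metis assoc eps_right)

lemma eps_of_idem: "e \<in> E \<Longrightarrow> eps e = e"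
  by (simp add: eps_def iv_idem idem_iff)

lemma eps_iv [simp]: "eps (iv a) = eps a"
  by (simp add: eps_def iv_mult_eq_eps)

lemma eps_mult: "eps (a \<cdot> b) = eps a \<cdot> eps b"
proof -
  have "eps (a \<cdot> b) = a \<cdot> (b \<cdot> iv b) \<cdot> iv a" by (simp add: eps_def iv_mult)
  also have "\<dots> = (b \<cdot> iv b) \<cdot> (a \<cdot> iv a)" using central_left_commute[OF mult_iv_idem[of b], of a "iv a"] by simp
  also have "\<dots> = eps a \<cdot> eps b" using idem_comm[OF mult_iv_idem[of b] mult_iv_idem[of a]] by (simp add: eps_def)
  finally show ?thesis .
qed

lemma Agrp_iff_eps: "a \<in> Agrp m e \<longleftrightarrow> eps a = e"
  by (auto simp: Agrp_def eps_def iv_mult_eq_eps[unfolded eps_def])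

lemma mult_iv_simp [simp]: "a \<cdot> iv a = eps a" by (simp add: eps_def)
lemma iv_mult_simp [simp]: "iv a \<cdot> a = eps a" by (simp add: iv_mult_eq_eps)
lemma mult_iv_simp' [simp]: "a \<cdot> (iv a \<cdot> z) = eps a \<cdot> z" by (metis assoc mult_iv_simp)
lemma iv_mult_simp' [simp]: "iv a \<cdot> (a \<cdot> z) = eps a \<cdot> z" by (metis assoc iv_mult_simp)

lemma eps_eps [simp]: "eps a \<cdot> eps a = eps a"
  using eps_in_idems idem_iff by blast

lemma eps_eps' [simp]: "eps a \<cdot> (eps a \<cdot> z) = eps a \<cdot> z"
  using idem_absorb eps_in_idems by blast

lemma eps_central: "eps u \<cdot> a = a \<cdot> eps u"
  by (rule central) simp

lemma eps_central': "eps u \<cdot> (a \<cdot> z) = a \<cdot> (eps u \<cdot> z)"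
  by (rule central_left_commute) simp

lemma conj_inj: "eps g = eps a \<Longrightarrow> eps g = eps a' \<Longrightarrow> g \<cdot> a \<cdot> iv g = g \<cdot> a' \<cdot> iv g \<Longrightarrow> a = a'"
proof -
  assume h: "eps g = eps a" "eps g = eps a'" "g \<cdot> a \<cdot> iv g = g \<cdot> a' \<cdot> iv g"
  have "iv g \<cdot> (g \<cdot> a \<cdot> iv g) \<cdot> g = iv g \<cdot> (g \<cdot> a' \<cdot> iv g) \<cdot> g" using h(3) by simp
  then have "eps g \<cdot> (a \<cdot> eps g) = eps g \<cdot> (a' \<cdot> eps g)" by simp
  moreover have "eps g \<cdot> (a \<cdot> eps g) = a" unfolding h(1) by simp
  moreover have "eps g \<cdot> (a' \<cdot> eps g) = a'" unfolding h(2) by simp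
  ultimately show ?thesis by simp
qed

lemma setmul_ideals_eq_inter:
  assumes X: "\<And>a b. a \<in> X \<Longrightarrow> a \<cdot> b \<in> X \<and> b \<cdot> a \<in> X"
    and Y: "\<And>a b. a \<in> Y \<Longrightarrow> a \<cdot> b \<in> Y \<and> b \<cdot> a \<in> Y"
  shows "setmul m X Y = X \<inter> Y"
proof
  show "setmul m X Y \<subseteq> X \<inter> Y" unfolding setmul_def using X Y by blast
  show "X \<inter> Y \<subseteq> setmul m X Y"
  proof
    fix c assume c: "c \<in> X \<inter> Y"
    have "iv c \<cdot> c \<in> Y" using Y c by blast
    then have "eps c \<in> Y" by simp
    moreover have "c = c \<cdot> eps c" by simp
    ultimately show "c \<in> setmul m X Y" unfolding setmul_def using c by blast
  qed
qed

text \<open>\<open>V\<close> picks for each \<open>a \<in> T\<close> a unit of the group \<open>A\<^bsub>eps a\<^esub>\<close>, compatibly with restriction to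
  smaller idempotents; the twisting \<open>w\<^sub>x\<^sub>,\<^sub>y\<close> of the theorem is of this form.\<close>
definition compatible_units where
  "compatible_units T V \<longleftrightarrow> (\<forall>a\<in>T. eps (V a) = eps a) \<and>
     (\<forall>a\<in>T. \<forall>b\<in>T. eps b \<cdot> eps a = eps b \<longrightarrow> V b = eps b \<cdot> V a)"

lemma compatible_unitsD:
  assumes "compatible_units T V"
  shows "a \<in> T \<Longrightarrow> eps (V a) = eps a"
    and "a \<in> T \<Longrightarrow> b \<in> T \<Longrightarrow> eps b \<cdot> eps a = eps b \<Longrightarrow> V b = eps b \<cdot> V a"
  using assms unfolding compatible_units_def by blast+

lemma compatible_units_eq:
  assumes V: "compatible_units T V" and "a \<in> T" "b \<in> T" "eps a = eps b"
  shows "V b = V a"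
proof -
  have "V b = eps b \<cdot> V a" using compatible_unitsD(2)[OF V assms(2,3)] assms(4) by simp
  also have "\<dots> = eps (V a) \<cdot> V a" using compatible_unitsD(1)[OF V assms(2)] assms(4) by simp
  finally show ?thesis by simp
qed

lemma compatible_units_iv:
  assumes V: "compatible_units T V"
  shows "compatible_units T (\<lambda>a. iv (V a))"
  unfolding compatible_units_def
proof (intro conjI ballI impI)
  fix a b assume a: "a \<in> T" and b: "b \<in> T" and le: "eps b \<cdot> eps a = eps b"
  have "iv (V b) = iv (V a) \<cdot> eps b"
    using compatible_unitsD(2)[OF V a b le] by (simp add: iv_mult iv_idem)
  then show "iv (V b) = eps b \<cdot> iv (V a)" by (simp add: eps_central)
qed (use compatible_unitsD(1)[OF V] in simp)

lemma multiplier_compatible_units: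
  assumes ideal: "\<And>a b. a \<in> T \<Longrightarrow> a \<cdot> b \<in> T \<and> b \<cdot> a \<in> T"
    and V: "compatible_units T V"
  shows "multiplier m T (\<lambda>a. V a \<cdot> a, \<lambda>a. a \<cdot> V a)"
proof -
  note ep = compatible_unitsD(1)[OF V] and restr = compatible_unitsD(2)[OF V]
  have V_mult: "V (s \<cdot> t) = eps s \<cdot> (eps t \<cdot> V s)" "V (s \<cdot> t) = eps s \<cdot> (eps t \<cdot> V t)"
    if s: "s \<in> T" and t: "t \<in> T" for s t
  proof -
    have st: "s \<cdot> t \<in> T" using ideal s by blast
    have c: "eps s \<cdot> eps t = eps t \<cdot> eps s" by (rule idem_comm) simp_all
    have "eps (s \<cdot> t) \<cdot> eps s = eps (s \<cdot> t)"
      by (simp add: eps_mult c[symmetric])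
    from restr[OF s st this] show "V (s \<cdot> t) = eps s \<cdot> (eps t \<cdot> V s)" by (simp add: eps_mult)
    have "eps (s \<cdot> t) \<cdot> eps t = eps (s \<cdot> t)"
      by (simp add: eps_mult idem_absorb)
    from restr[OF t st this] show "V (s \<cdot> t) = eps s \<cdot> (eps t \<cdot> V t)" by (simp add: eps_mult)
  qed
  show ?thesis unfolding multiplier_def fst_conv snd_conv
  proof (intro conjI ballI)
    fix s assume s: "s \<in> T"
    show "V s \<cdot> s \<in> T" "s \<cdot> V s \<in> T" using ideal[OF s] by auto
  next
    fix s t assume s: "s \<in> T" and t: "t \<in> T"
    have "V (s \<cdot> t) \<cdot> (s \<cdot> t) = eps (V s \<cdot> (s \<cdot> t)) \<cdot> (V s \<cdot> (s \<cdot> t))"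
      using V_mult(1)[OF s t] ep[OF s] by (simp add: eps_mult)
    then show "V (s \<cdot> t) \<cdot> (s \<cdot> t) = V s \<cdot> s \<cdot> t" by simp
    have "s \<cdot> t \<cdot> V (s \<cdot> t) = (s \<cdot> t) \<cdot> eps (s \<cdot> t) \<cdot> V t"
      using V_mult(2)[OF s t] by (simp add: eps_mult)
    then show "s \<cdot> t \<cdot> V (s \<cdot> t) = s \<cdot> (t \<cdot> V t)" by (simp only: eps_right) simp
    have "s \<cdot> (V t \<cdot> t) = s \<cdot> (eps s \<cdot> (eps t \<cdot> (V t \<cdot> t)))"
      by (simp only: eps_central'[of t "V t" t]) simp
    also have "\<dots> = s \<cdot> (eps s \<cdot> (eps t \<cdot> (V s \<cdot> t)))"
      using V_mult[OF s t] by (metis assoc)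
    also have "\<dots> = s \<cdot> V s \<cdot> t"
      by (simp only: eps_central'[of t "V s" t]) simp
    finally show "s \<cdot> (V t \<cdot> t) = s \<cdot> V s \<cdot> t" .
  qed
qed

lemma mltp_is_inv_compatible_units:
  assumes ideal: "\<And>a b. a \<in> T \<Longrightarrow> a \<cdot> b \<in> T \<and> b \<cdot> a \<in> T"
    and V: "compatible_units T V"
  shows "mltp_is_inv m T (\<lambda>a. V a \<cdot> a, \<lambda>a. a \<cdot> V a) (\<lambda>a. iv (V a) \<cdot> a, \<lambda>a. a \<cdot> iv (V a))"
proof -
  have V_restr: "V (iv (V s) \<cdot> s) = V s" "V (s \<cdot> iv (V s)) = V s" "V (V s \<cdot> s) = V s" "V (s \<cdot> V s) = V s"
    if s: "s \<in> T" for s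
  proof -
    have "V s' = V s" if "s' \<in> T" "eps s' = eps s" for s'
      using compatible_units_eq[OF V s that(1)] that(2) by simp
    then show "V (iv (V s) \<cdot> s) = V s" "V (s \<cdot> iv (V s)) = V s" "V (V s \<cdot> s) = V s" "V (s \<cdot> V s) = V s"
      using ideal[OF s] compatible_unitsD(1)[OF V s] by (simp_all add: eps_mult)
  qed
  show ?thesis
    unfolding mltp_is_inv_def mltp_eq_def mltp_comp_def
    using multiplier_compatible_units[OF ideal compatible_units_iv[OF V]] compatible_unitsD(1)[OF V] V_restr
    by simp
qed

lemma unit_multiplier_compatible_units:
  assumes "\<And>a b. a \<in> T \<Longrightarrow> a \<cdot> b \<in> T \<and> b \<cdot> a \<in> T" and "compatible_units T V"
  shows "unit_multiplier m T (\<lambda>a. V a \<cdot> a, \<lambda>a. a \<cdot> V a)"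
  unfolding unit_multiplier_def
  using multiplier_compatible_units[OF assms] mltp_is_inv_compatible_units[OF assms] by blast

lemma mltp_inv_compatible_units:
  assumes ideal: "\<And>a b. a \<in> T \<Longrightarrow> a \<cdot> b \<in> T \<and> b \<cdot> a \<in> T"
    and V: "compatible_units T V" and c: "c \<in> T"
  shows "snd (mltp_inv m T (\<lambda>a. V a \<cdot> a, \<lambda>a. a \<cdot> V a)) c = c \<cdot> iv (V c)"
proof -
  let ?w = "(\<lambda>a. V a \<cdot> a, \<lambda>a. a \<cdot> V a)"
  have "mltp_is_inv m T ?w (mltp_inv m T ?w)"
    unfolding mltp_inv_def by (rule someI, rule mltp_is_inv_compatible_units[OF ideal V])
  then have inv: "snd (mltp_inv m T ?w) (d \<cdot> V d) = d" if "d \<in> T" for d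
    using that unfolding mltp_is_inv_def mltp_eq_def mltp_comp_def by auto
  let ?d = "c \<cdot> iv (V c)"
  have d: "?d \<in> T" using ideal[OF c] by blast
  have "V ?d = V c"
    using compatible_units_eq[OF V c d] compatible_unitsD(1)[OF V c] by (simp add: eps_mult)
  then have "?d \<cdot> V ?d = c" using compatible_unitsD(1)[OF V c] by simp
  then show ?thesis using inv[OF d] by simp
qed

end

section \<open>Sieben twisted module structures\<close>

locale sieben_module = S: E_unitary_sgrp mS + A: clifford_sgrp mA
  for mS :: "'s \<Rightarrow> 's \<Rightarrow> 's" (infixl "\<cdot>" 70) and mA :: "'a \<Rightarrow> 'a \<Rightarrow> 'a" (infixl "\<odot>" 70) +
  fixes \<alpha> :: "'s \<Rightarrow> 'a" and lam :: "'s \<Rightarrow> 'a \<Rightarrow> 'a" and f :: "'s \<Rightarrow> 's \<Rightarrow> 'a"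
  assumes sieben: "sieben_twisted_module mS mA \<alpha> lam f"
begin

abbreviation si where "si \<equiv> sinv mS"
abbreviation ai where "ai \<equiv> sinv mA"
abbreviation ES where "ES \<equiv> idems mS"
abbreviation EA where "EA \<equiv> idems mA"
abbreviation eps where "eps \<equiv> A.eps"

lemma twisted_module: "twisted_module mS mA \<alpha> lam f"
  using sieben by (simp add: sieben_twisted_module_def)

lemma alpha_bij: "bij_betw \<alpha> ES EA"
  using twisted_module unfolding twisted_module_def by blast

lemma alpha_mult: "e \<in> ES \<Longrightarrow> e' \<in> ES \<Longrightarrow> \<alpha> (e \<cdot> e') = \<alpha> e \<odot> \<alpha> e'"
  using twisted_module unfolding twisted_module_def by blast

lemma lam_rel_inv: "rel_inv_endo mA (lam s)"
  using twisted_module unfolding twisted_module_def by blast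

lemma eps_f: "eps (f s t) = \<alpha> (s \<cdot> t \<cdot> (si t \<cdot> si s))"
  using twisted_module unfolding twisted_module_def A.Agrp_iff_eps by blast

lemma lam_idem: "e \<in> ES \<Longrightarrow> lam e a = \<alpha> e \<odot> a"
  using twisted_module unfolding twisted_module_def by blast

lemma lam_alpha: "e \<in> ES \<Longrightarrow> lam s (\<alpha> e) = \<alpha> (s \<cdot> e \<cdot> si s)"
  using twisted_module unfolding twisted_module_def by blast

lemma lam_lam: "lam s (lam t a) = f s t \<odot> lam (s \<cdot> t) a \<odot> ai (f s t)"
  using twisted_module unfolding twisted_module_def by blast

lemma cocycle: "lam s (f t u) \<odot> f s (t \<cdot> u) = f s t \<odot> f (s \<cdot> t) u"
  using twisted_module unfolding twisted_module_def by blast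

lemma f_idem_right: "e \<in> ES \<Longrightarrow> f s e = \<alpha> (s \<cdot> e \<cdot> si s)"
  using sieben unfolding sieben_twisted_module_def by blast

lemma f_idem_left: "e \<in> ES \<Longrightarrow> f e s = \<alpha> (e \<cdot> s \<cdot> si s)"
  using sieben unfolding sieben_twisted_module_def by blast

lemma alpha_in_idems [simp]: "e \<in> ES \<Longrightarrow> \<alpha> e \<in> EA"
  using alpha_bij by (auto simp: bij_betw_def)

lemma alpha_inj: "e \<in> ES \<Longrightarrow> e' \<in> ES \<Longrightarrow> \<alpha> e = \<alpha> e' \<Longrightarrow> e = e'"
  using alpha_bij by (auto simp: bij_betw_def inj_on_def)

lemma idems_A_alpha: "g \<in> EA \<Longrightarrow> \<exists>e\<in>ES. g = \<alpha> e"
  using alpha_bij by (auto simp: bij_betw_def)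

lemma eps_alpha [simp]: "e \<in> ES \<Longrightarrow> eps (\<alpha> e) = \<alpha> e"
  by (simp add: A.eps_of_idem)

lemma iv_alpha [simp]: "e \<in> ES \<Longrightarrow> ai (\<alpha> e) = \<alpha> e"
  by (simp add: A.iv_idem)

lemma alpha_idem [simp]: "e \<in> ES \<Longrightarrow> \<alpha> e \<odot> \<alpha> e = \<alpha> e"
  using alpha_in_idems[of e] by (simp add: A.idem_iff)

lemma alpha_idem_absorb [simp]: "e \<in> ES \<Longrightarrow> \<alpha> e \<odot> (\<alpha> e \<odot> z) = \<alpha> e \<odot> z"
  by (rule A.idem_absorb[OF alpha_in_idems])

text \<open>\<open>eS a\<close> is the idempotent \<open>e\<close> of \<open>S\<close> with \<open>a \<in> A\<^bsub>\<alpha> e\<^esub>\<close>.\<close>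
definition eS where "eS a = the_inv_into ES \<alpha> (eps a)"

lemma eS_in_idems [simp]: "eS a \<in> ES"
  unfolding eS_def using alpha_bij A.eps_in_idems[of a]
  by (intro the_inv_into_into) (auto simp: bij_betw_def)

lemma alpha_eS [simp]: "\<alpha> (eS a) = eps a"
  unfolding eS_def using alpha_bij A.eps_in_idems[of a]
  by (intro f_the_inv_into_f) (auto simp: bij_betw_def)

lemma eS_iff: "e \<in> ES \<Longrightarrow> eps a = \<alpha> e \<longleftrightarrow> eS a = e"
  using alpha_inj[of "eS a" e] by auto

lemma eS_alpha [simp]: "e \<in> ES \<Longrightarrow> eS (\<alpha> e) = e"
  using eS_iff[of e "\<alpha> e"] by simp

lemma eS_mult: "eS (a \<odot> b) = eS a \<cdot> eS b"
  by (rule eS_iff[THEN iffD1]) (simp_all add: A.eps_mult alpha_mult S.idem_mult_closed)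

lemma alpha_absorb: "e \<in> ES \<Longrightarrow> g \<in> ES \<Longrightarrow> e \<cdot> g = g \<Longrightarrow> eps c = \<alpha> g \<Longrightarrow> \<alpha> e \<odot> c = c"
  by (metis A.assoc A.eps_left alpha_mult)

lemma lam_endo: "endo mA (lam s)"
  using lam_rel_inv by (simp add: rel_inv_endo_def)

lemma lam_mult: "lam s (a \<odot> b) = lam s a \<odot> lam s b"
  using lam_endo by (simp add: endo_def)

lemma lam_iv: "lam s (ai a) = ai (lam s a)"
  using A.endo_iv[OF lam_endo] .

lemma eps_lam: "eps (lam s a) = \<alpha> (s \<cdot> eS a \<cdot> si s)"
proof -
  have "eps (lam s a) = lam s (eps a)"
    by (simp add: A.eps_def lam_mult lam_iv del: A.mult_iv_simp A.mult_iv_simp')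
  also have "\<dots> = \<alpha> (s \<cdot> eS a \<cdot> si s)" using lam_alpha[OF eS_in_idems[of a], of s] by simp
  finally show ?thesis .
qed

text \<open>The image of \<open>\<lambda>\<^sub>s\<close> has an identity \<open>\<lambda>\<^sub>s(\<alpha> g)\<close>, which lies below \<open>\<alpha>(s s\<inverse>)\<close>.\<close>
lemma lam_absorb: "\<alpha> (s \<cdot> si s) \<odot> lam s a = lam s a"
proof -
  obtain e where e: "e \<in> EA" and idn: "is_identity_of mA (range (lam s)) (lam s e)"
    using lam_rel_inv unfolding rel_inv_endo_def by blast
  obtain g where g: "g \<in> ES" "e = \<alpha> g" using idems_A_alpha[OF e] by blast
  have "\<alpha> (s \<cdot> g \<cdot> si s) \<odot> lam s a = lam s a"
    using idn g lam_alpha[OF g(1), of s] unfolding is_identity_of_def by auto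
  then have "\<alpha> (s \<cdot> si s) \<odot> lam s a = \<alpha> (s \<cdot> si s) \<odot> (\<alpha> (s \<cdot> g \<cdot> si s) \<odot> lam s a)" by simp
  also have "\<dots> = \<alpha> (s \<cdot> si s \<cdot> (s \<cdot> g \<cdot> si s)) \<odot> lam s a"
    by (simp only: A.assoc alpha_mult[OF S.mult_iv_idem S.conj_idem[OF g(1)]])
  also have "s \<cdot> si s \<cdot> (s \<cdot> g \<cdot> si s) = s \<cdot> g \<cdot> si s" by simp
  finally show ?thesis using \<open>\<alpha> (s \<cdot> g \<cdot> si s) \<odot> lam s a = lam s a\<close> by simp
qed

lemma lam_mult_idem_right: "e \<in> ES \<Longrightarrow> lam (s \<cdot> e) c = lam s (\<alpha> e \<odot> c)"
proof -
  assume e: "e \<in> ES"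
  have c: "s \<cdot> e \<cdot> si (s \<cdot> e) = s \<cdot> e \<cdot> si s"
    using e by (simp add: S.iv_mult S.iv_idem S.idem_absorb)
  have "lam s (\<alpha> e \<odot> c) = lam s (lam e c)" by (simp add: lam_idem e)
  also have "\<dots> = \<alpha> (s \<cdot> e \<cdot> si s) \<odot> lam (s \<cdot> e) c \<odot> \<alpha> (s \<cdot> e \<cdot> si s)"
    by (simp add: lam_lam f_idem_right e S.conj_idem del: S.assoc)
  also have "\<dots> = \<alpha> (s \<cdot> e \<cdot> si s) \<odot> lam (s \<cdot> e) c"
    using A.central[OF alpha_in_idems[OF S.conj_idem[OF e, of s]], of "lam (s \<cdot> e) c"] S.conj_idem[OF e, of s]
    by (simp add: A.idem_absorb alpha_idem_absorb)
  also have "\<dots> = lam (s \<cdot> e) c" using lam_absorb[of "s \<cdot> e" c] c by (simp del: S.assoc)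
  finally show ?thesis by simp
qed

lemma lam_surj: "eps b = \<alpha> (s \<cdot> si s) \<Longrightarrow> \<exists>a. eS a = si s \<cdot> s \<and> lam s a = b"
proof -
  assume hb: "eps b = \<alpha> (s \<cdot> si s)"
  define F where "F = f s (si s)"
  have eF: "eps F = \<alpha> (s \<cdot> si s)" unfolding F_def using eps_f[of s "si s"] by simp
  define d where "d = ai F \<odot> b \<odot> F"
  have "eps d = \<alpha> (s \<cdot> si s)" unfolding d_def by (simp add: A.eps_mult eF hb)
  then have ed: "eS d = s \<cdot> si s" using eS_iff[of "s \<cdot> si s" d] by simp
  define a where "a = lam (si s) d"
  have "eps a = \<alpha> (si s \<cdot> s)" unfolding a_def eps_lam ed by simp
  then have ha: "eS a = si s \<cdot> s" using eS_iff[of "si s \<cdot> s" a] by simp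
  have "lam s a = F \<odot> lam (s \<cdot> si s) d \<odot> ai F" by (simp add: a_def lam_lam F_def)
  also have "\<dots> = F \<odot> (eps F \<odot> d) \<odot> ai F" by (simp add: lam_idem eF)
  also have "\<dots> = b"
  proof -
    have "eps F = eps b" using hb eF by simp
    then have "eps F \<odot> (b \<odot> z) = b \<odot> z" "b \<odot> eps F = b" for z by simp_all
    then show ?thesis unfolding d_def by simp
  qed
  finally show ?thesis using ha by blast
qed

lemma lam_inj: "eS a = si s \<cdot> s \<Longrightarrow> eS a' = si s \<cdot> s \<Longrightarrow> lam s a = lam s a' \<Longrightarrow> a = a'"
proof -
  assume h: "eS a = si s \<cdot> s" "eS a' = si s \<cdot> s" "lam s a = lam s a'"
  define G where "G = f (si s) s"
  have eG: "eps G = \<alpha> (si s \<cdot> s)" unfolding G_def using eps_f[of "si s" s] by simp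
  have conj: "lam (si s) (lam s c) = G \<odot> c \<odot> ai G" if "eS c = si s \<cdot> s" for c
  proof -
    have ec: "eps c = \<alpha> (si s \<cdot> s)" using that alpha_eS[of c] by simp
    have "lam (si s) (lam s c) = G \<odot> (\<alpha> (si s \<cdot> s) \<odot> c) \<odot> ai G"
      by (simp add: lam_lam lam_idem G_def del: A.assoc)
    also have "\<dots> = G \<odot> c \<odot> ai G" using A.eps_left[of c] ec by simp
    finally show ?thesis .
  qed
  have "G \<odot> a \<odot> ai G = G \<odot> a' \<odot> ai G" using conj[OF h(1)] conj[OF h(2)] h(3) by simp
  moreover have "eps G = eps a" "eps G = eps a'" using eG h(1,2) alpha_eS[of a] alpha_eS[of a'] by simp_all
  ultimately show ?thesis using A.conj_inj by blast
qed

lemma f_idem_mult_left: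
  assumes e: "e \<in> ES"
  shows "f (e \<cdot> s) u = \<alpha> e \<odot> f s u"
proof -
  define k where "k = s \<cdot> u \<cdot> si (s \<cdot> u)"
  have kE: "k \<in> ES" unfolding k_def by (rule S.mult_iv_idem)
  have eps_fsu: "eps (f s u) = \<alpha> k" unfolding eps_f k_def by (simp add: S.iv_mult)
  have "eps (f (e \<cdot> s) u) = \<alpha> (e \<cdot> (k \<cdot> e))" unfolding eps_f k_def by (simp add: S.iv_mult S.iv_idem[OF e])
  then have eps_fesu: "eps (f (e \<cdot> s) u) = \<alpha> (e \<cdot> k)"
    using S.idem_comm[OF kE e] S.idem_absorb[OF e] by simp
  have "lam e (f s u) \<odot> f e (s \<cdot> u) = f e s \<odot> f (e \<cdot> s) u" by (rule cocycle)
  moreover have "lam e (f s u) \<odot> f e (s \<cdot> u) = \<alpha> e \<odot> f s u"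
  proof -
    have "f e (s \<cdot> u) = \<alpha> (e \<cdot> k)" using f_idem_left[OF e, of "s \<cdot> u"] unfolding k_def by simp
    then have "lam e (f s u) \<odot> f e (s \<cdot> u) = \<alpha> e \<odot> f s u \<odot> eps (\<alpha> e \<odot> f s u)"
      by (simp add: lam_idem e A.eps_mult eps_fsu alpha_mult kE)
    then show ?thesis by (simp del: A.assoc)
  qed
  moreover have "f e s \<odot> f (e \<cdot> s) u = f (e \<cdot> s) u"
  proof (rule alpha_absorb[OF _ _ _ eps_fesu, of "e \<cdot> s \<cdot> si s", folded f_idem_left[OF e]])
    show "e \<cdot> s \<cdot> si s \<in> ES" "e \<cdot> k \<in> ES" using e kE by (simp_all add: S.idem_mult_closed)
    have "s \<cdot> si s \<cdot> k = k" unfolding k_def by (simp add: S.iv_mult)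
    then show "e \<cdot> s \<cdot> si s \<cdot> (e \<cdot> k) = e \<cdot> k"
      using S.idem_left_commute[OF S.mult_iv_idem[of s] e] S.idem_absorb[OF e] by (metis S.assoc)
  qed
  ultimately show ?thesis by simp
qed

lemma f_mult_idem_right:
  assumes e: "e \<in> ES"
  shows "f s (u \<cdot> e) = \<alpha> (s \<cdot> u \<cdot> e \<cdot> si u \<cdot> si s) \<odot> f s u"
proof -
  define k where "k = s \<cdot> u \<cdot> e \<cdot> si u \<cdot> si s"
  have kE: "k \<in> ES" unfolding k_def using S.conj_idem[OF e, of "s \<cdot> u"] by (simp add: S.iv_mult)
  have "lam s (f u e) \<odot> f s (u \<cdot> e) = f s u \<odot> f (s \<cdot> u) e" by (rule cocycle)
  moreover have "lam s (f u e) = \<alpha> k"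
    using lam_alpha[OF S.conj_idem[OF e, of u], of s] f_idem_right[OF e, of u] unfolding k_def by simp
  moreover have "f (s \<cdot> u) e = \<alpha> k"
    using f_idem_right[OF e, of "s \<cdot> u"] unfolding k_def by (simp add: S.iv_mult)
  moreover have "eps (f s (u \<cdot> e)) = \<alpha> k"
    unfolding eps_f k_def by (simp add: S.iv_mult S.iv_idem[OF e] S.idem_absorb[OF e])
  ultimately have "f s (u \<cdot> e) = f s u \<odot> \<alpha> k"
    using A.eps_left[of "f s (u \<cdot> e)"] by simp
  then show ?thesis unfolding k_def[symmetric] using A.central[OF alpha_in_idems[OF kE]] by simp
qed

lemma f_eps_absorb [simp]: "\<alpha> (s \<cdot> (t \<cdot> (si t \<cdot> si s))) \<odot> f s t = f s t"
  using A.eps_left[of "f s t"] by (simp add: eps_f)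

lemma f_restrict_domains: "f (s \<cdot> (t \<cdot> si t)) (si s \<cdot> (s \<cdot> t)) = f s t"
proof -
  define k where "k = s \<cdot> t \<cdot> (si t \<cdot> si s)"
  have kE: "k \<in> ES" unfolding k_def using S.conj_idem[OF S.mult_iv_idem[of t], of s] by simp
  then have kk: "k \<cdot> k = k" by (simp add: S.idem_iff)
  have "s \<cdot> (t \<cdot> si t) = k \<cdot> s"
    unfolding k_def using S.mult_idem_eq_conj_mult[OF S.mult_iv_idem[of t], of s] by simp
  moreover have "si s \<cdot> (s \<cdot> t) = t \<cdot> (si t \<cdot> (si s \<cdot> s) \<cdot> t)"
    using S.idem_mult_eq_mult_conj[OF S.iv_mult_idem[of s], of t] by simp
  moreover have "s \<cdot> t \<cdot> (si t \<cdot> (si s \<cdot> s) \<cdot> t) \<cdot> si t \<cdot> si s = k"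
    using kk unfolding k_def by simp
  moreover have "si t \<cdot> (si s \<cdot> s) \<cdot> t \<in> ES"
    using S.conj_idem[OF S.iv_mult_idem[of s], of "si t"] by simp
  ultimately have "f (s \<cdot> (t \<cdot> si t)) (si s \<cdot> (s \<cdot> t)) = \<alpha> k \<odot> (\<alpha> k \<odot> f s t)"
    by (simp add: f_idem_mult_left[OF kE] f_mult_idem_right del: S.assoc)
  also have "\<dots> = f s t" unfolding k_def using kE k_def by simp
  finally show ?thesis .
qed

section \<open>The partial isomorphisms \<open>\<theta>\<^sub>x\<close>\<close>

abbreviation D where "D \<equiv> Dmap mS mA \<alpha>"
abbreviation \<theta> where "\<theta> \<equiv> thetamap mS mA \<alpha> lam"
abbreviation GG where "GG \<equiv> GS mS"
abbreviation Gmult (infixl "\<otimes>" 70) where "x \<otimes> y \<equiv> x \<otimes>\<^bsub>GG\<^esub> y"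
abbreviation Ginv where "Ginv x \<equiv> inv\<^bsub>GG\<^esub> x"

lemma mem_D: "a \<in> D x \<longleftrightarrow> (\<exists>s\<in>x. eS a = s \<cdot> si s)"
  unfolding Dmap_def by (auto simp: A.Agrp_iff_eps eS_iff)

lemma mem_DI: "s \<in> x \<Longrightarrow> eS a = s \<cdot> si s \<Longrightarrow> a \<in> D x"
  using mem_D by blast

lemma mem_D_inv: "x \<in> carrier GG \<Longrightarrow> a \<in> D (Ginv x) \<longleftrightarrow> (\<exists>s\<in>x. eS a = si s \<cdot> s)"
  unfolding mem_D by (metis S.GS_inv_mem_iff S.iv_iv)

lemma D_mult_right: "x \<in> carrier GG \<Longrightarrow> a \<in> D x \<Longrightarrow> a \<odot> b \<in> D x"
proof -
  assume x: "x \<in> carrier GG" and a: "a \<in> D x"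
  then obtain s where s: "s \<in> x" "eS a = s \<cdot> si s" by (auto simp: mem_D)
  let ?g = "eS a \<cdot> eS b"
  have gE: "?g \<in> ES" by (simp add: S.idem_mult_closed)
  have "?g \<cdot> (s \<cdot> si s) = eS a \<cdot> (eS b \<cdot> eS a)" using s(2) by simp
  also have "\<dots> = ?g" using S.idem_comm[OF eS_in_idems[of b] eS_in_idems[of a]] S.idem_absorb by simp
  finally have "?g \<cdot> s \<cdot> si (?g \<cdot> s) = ?g" by (rule S.range_idem_mult[OF gE])
  then show ?thesis using S.class_idem_mult_left[OF x s(1) gE] by (intro mem_DI[of "?g \<cdot> s"]) (simp_all add: eS_mult)
qed

lemma D_mult_left: "x \<in> carrier GG \<Longrightarrow> a \<in> D x \<Longrightarrow> b \<odot> a \<in> D x"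
proof -
  assume x: "x \<in> carrier GG" and a: "a \<in> D x"
  have "a \<odot> (ai a \<odot> (b \<odot> a)) \<in> D x" by (rule D_mult_right[OF x a])
  then show ?thesis using A.eps_central'[of a b a] by simp
qed

lemma D_ideal: "x \<in> carrier GG \<Longrightarrow> a \<in> D x \<Longrightarrow> a \<odot> b \<in> D x \<and> b \<odot> a \<in> D x"
  using D_mult_right D_mult_left by blast

lemma setmul_D: "x \<in> carrier GG \<Longrightarrow> y \<in> carrier GG \<Longrightarrow> setmul mA (D x) (D y) = D x \<inter> D y"
  by (rule A.setmul_ideals_eq_inter) (use D_ideal in blast)+

lemma D_nonempty: "x \<in> carrier GG \<Longrightarrow> D x \<noteq> {}"
proof -
  assume x: "x \<in> carrier GG"
  then obtain s where s: "s \<in> x" using S.carrier_GS_nonempty by blast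
  have "\<alpha> (s \<cdot> si s) \<in> D x" using s by (intro mem_DI[of s]) simp_all
  then show ?thesis by blast
qed

lemma D_one: "D \<one>\<^bsub>GG\<^esub> = UNIV"
  using eS_in_idems by (auto simp: mem_D S.GS_one S.iv_idem S.idem_iff intro!: bexI[of _ "eS _"])

lemma theta_eq: "x \<in> carrier GG \<Longrightarrow> s \<in> x \<Longrightarrow> eS a = si s \<cdot> s \<Longrightarrow> \<theta> x a = lam s a"
proof -
  assume h: "x \<in> carrier GG" "s \<in> x" "eS a = si s \<cdot> s"
  have "(THE t. t \<in> x \<and> \<alpha> (si t \<cdot> t) = eps a) = s"
  proof (rule the_equality)
    show "s \<in> x \<and> \<alpha> (si s \<cdot> s) = eps a" using h alpha_eS[of a] by simp
    fix t assume t: "t \<in> x \<and> \<alpha> (si t \<cdot> t) = eps a"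
    then have "si t \<cdot> t = si s \<cdot> s" using h(3) eS_iff[of "si t \<cdot> t" a] by simp
    then show "t = s" using S.class_eq_if_domain_eq[OF h(1)] t h(2) by blast
  qed
  then show ?thesis unfolding thetamap_def A.eps_def[symmetric] by simp
qed

lemma eS_lam: "eS a = si s \<cdot> s \<Longrightarrow> eS (lam s a) = s \<cdot> si s"
  using eS_iff[of "s \<cdot> si s" "lam s a"] by (simp add: eps_lam)

lemma theta_witness:
  assumes x: "x \<in> carrier GG" and a: "a \<in> D (Ginv x)"
  obtains s where "s \<in> x" "eS a = si s \<cdot> s" "\<theta> x a = lam s a" "eS (\<theta> x a) = s \<cdot> si s"
  using a theta_eq[OF x] eS_lam unfolding mem_D_inv[OF x] by metis

lemma theta_into: "x \<in> carrier GG \<Longrightarrow> a \<in> D (Ginv x) \<Longrightarrow> \<theta> x a \<in> D x"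
  by (metis theta_witness mem_DI)

lemma theta_inj: "x \<in> carrier GG \<Longrightarrow> inj_on (\<theta> x) (D (Ginv x))"
proof (rule inj_onI)
  fix a b assume x: "x \<in> carrier GG" and a: "a \<in> D (Ginv x)" and b: "b \<in> D (Ginv x)"
    and eq: "\<theta> x a = \<theta> x b"
  obtain s where s: "s \<in> x" "eS a = si s \<cdot> s" "\<theta> x a = lam s a" "eS (\<theta> x a) = s \<cdot> si s"
    using theta_witness[OF x a] .
  obtain t where t: "t \<in> x" "eS b = si t \<cdot> t" "\<theta> x b = lam t b" "eS (\<theta> x b) = t \<cdot> si t"
    using theta_witness[OF x b] .
  have "s = t" using S.class_eq_if_range_eq[OF x s(1) t(1)] s(4) t(4) eq by simp
  then show "a = b" using lam_inj[of a s b] s t eq by simp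
qed

lemma theta_surj: "x \<in> carrier GG \<Longrightarrow> b \<in> D x \<Longrightarrow> \<exists>a\<in>D (Ginv x). \<theta> x a = b"
proof -
  assume x: "x \<in> carrier GG" and b: "b \<in> D x"
  then obtain s where s: "s \<in> x" "eS b = s \<cdot> si s" using mem_D by blast
  then obtain a where a: "eS a = si s \<cdot> s" "lam s a = b" using lam_surj[of b s] alpha_eS[of b] by auto
  then show ?thesis using mem_D_inv[OF x] theta_eq[OF x s(1) a(1)] s(1) by auto
qed

text \<open>Both factors act through the common witness \<open>s\<^sub>a (eS b) = s\<^sub>b (eS a)\<close> of \<open>a \<odot> b\<close>.\<close>
lemma theta_mult:
  assumes x: "x \<in> carrier GG" and a: "a \<in> D (Ginv x)" and b: "b \<in> D (Ginv x)"
  shows "\<theta> x (a \<odot> b) = \<theta> x a \<odot> \<theta> x b"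
proof -
  obtain sa where sa: "sa \<in> x" "eS a = si sa \<cdot> sa" "\<theta> x a = lam sa a" "eS (\<theta> x a) = sa \<cdot> si sa"
    using theta_witness[OF x a] .
  obtain sb where sb: "sb \<in> x" "eS b = si sb \<cdot> sb" "\<theta> x b = lam sb b" "eS (\<theta> x b) = sb \<cdot> si sb"
    using theta_witness[OF x b] .
  define s where "s = sa \<cdot> eS b"
  have s': "s = sb \<cdot> eS a"
    unfolding s_def sa(2) sb(2) by (rule S.class_mult_domain_comm[OF x sa(1) sb(1)])
  have sx: "s \<in> x" unfolding s_def using S.class_idem_mult_right[OF x sa(1) eS_in_idems] .
  have s_dom: "si s \<cdot> s = eS (a \<odot> b)"
    unfolding s_def eS_mult S.domain_mult_idem[OF eS_in_idems] sa(2) by simp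
  define h where "h = sa \<cdot> si sb"
  have hE: "h \<in> ES" unfolding h_def using S.sigma_mult_iv_idem[OF S.carrier_GS_sigma[OF x sa(1) sb(1)]] .
  have h1: "sa \<cdot> eS b \<cdot> si sa = h"
    unfolding h_def sb(2) using S.sigma_conj_domain[OF S.carrier_GS_sigma[OF x sa(1) sb(1)]] by simp
  have h2: "sb \<cdot> eS a \<cdot> si sb = h"
    unfolding h_def sa(2) S.sigma_mult_iv_comm[OF S.carrier_GS_sigma[OF x sa(1) sb(1)]]
    using S.sigma_conj_domain[OF S.carrier_GS_sigma[OF x sb(1) sa(1)]] by simp
  have la: "lam s a = \<alpha> h \<odot> \<theta> x a"
    unfolding s_def sa(3) lam_mult_idem_right[OF eS_in_idems] lam_mult lam_alpha[OF eS_in_idems] h1 ..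
  have lb: "lam s b = \<alpha> h \<odot> \<theta> x b"
    unfolding s' sb(3) lam_mult_idem_right[OF eS_in_idems] lam_mult lam_alpha[OF eS_in_idems] h2 ..
  have "\<theta> x (a \<odot> b) = lam s a \<odot> lam s b" using theta_eq[OF x sx s_dom[symmetric]] lam_mult by simp
  also have "\<dots> = \<alpha> h \<odot> \<theta> x a \<odot> (\<alpha> h \<odot> \<theta> x b)" unfolding la lb ..
  also have "\<dots> = \<alpha> h \<odot> (\<theta> x a \<odot> \<theta> x b)"
    using A.central_left_commute[OF alpha_in_idems[OF hE], of "\<theta> x a" "\<theta> x b", symmetric] hE by simp
  also have "\<dots> = \<theta> x a \<odot> \<theta> x b"
  proof -
    have "eps (\<theta> x a) = \<alpha> (sa \<cdot> si sa)" "eps (\<theta> x b) = \<alpha> (sb \<cdot> si sb)"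
      using alpha_eS sa(4) sb(4) by metis+
    then have "eps (\<theta> x a \<odot> \<theta> x b) = \<alpha> (sa \<cdot> si sa \<cdot> (sb \<cdot> si sb))"
      by (simp add: A.eps_mult alpha_mult del: S.assoc)
    also have "\<dots> = \<alpha> h"
      unfolding h_def using S.sigma_range_mult[OF S.carrier_GS_sigma[OF x sa(1) sb(1)]] by simp
    finally show ?thesis using A.eps_left[of "\<theta> x a \<odot> \<theta> x b"] by simp
  qed
  finally show ?thesis .
qed

lemma theta_one: "\<theta> \<one>\<^bsub>GG\<^esub> a = a"
proof -
  have "eS a \<in> \<one>\<^bsub>GG\<^esub>" by (simp add: S.GS_one)
  moreover have "eS a = si (eS a) \<cdot> eS a"
    using S.iv_idem[OF eS_in_idems[of a]] S.idem_iff[THEN iffD1, OF eS_in_idems[of a]] by simp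
  ultimately have "\<theta> \<one>\<^bsub>GG\<^esub> a = lam (eS a) a" using theta_eq[OF S.G.one_closed] by simp
  then show ?thesis by (simp add: lam_idem)
qed

lemma theta_image:
  assumes x: "x \<in> carrier GG" and y: "y \<in> carrier GG"
  shows "\<theta> x ` (D (Ginv x) \<inter> D y) = D x \<inter> D (x \<otimes> y)"
proof
  show "\<theta> x ` (D (Ginv x) \<inter> D y) \<subseteq> D x \<inter> D (x \<otimes> y)"
  proof
    fix b assume "b \<in> \<theta> x ` (D (Ginv x) \<inter> D y)"
    then obtain a where a: "a \<in> D (Ginv x)" "a \<in> D y" "b = \<theta> x a" by blast
    obtain s where s: "s \<in> x" "eS a = si s \<cdot> s" "\<theta> x a = lam s a" "eS (\<theta> x a) = s \<cdot> si s"
      using theta_witness[OF x a(1)] .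
    obtain q where q: "q \<in> y" "eS a = q \<cdot> si q" using a(2) mem_D by blast
    have "s \<cdot> q \<cdot> si (s \<cdot> q) = s \<cdot> (q \<cdot> si q) \<cdot> si s" by (simp add: S.iv_mult)
    also have "\<dots> = s \<cdot> (si s \<cdot> s) \<cdot> si s" using q(2) s(2) by (simp only:)
    finally have "eS b = s \<cdot> q \<cdot> si (s \<cdot> q)" using a(3) s(4) by simp
    then show "b \<in> D x \<inter> D (x \<otimes> y)"
      using mem_DI[OF S.GS_mult_mem[OF x y s(1) q(1)]] theta_into[OF x a(1)] a(3) by blast
  qed
  show "D x \<inter> D (x \<otimes> y) \<subseteq> \<theta> x ` (D (Ginv x) \<inter> D y)"
  proof
    fix b assume b: "b \<in> D x \<inter> D (x \<otimes> y)"
    obtain s where s: "s \<in> x" "eS b = s \<cdot> si s" using b mem_D by blast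
    obtain t where t: "t \<in> x \<otimes> y" "eS b = t \<cdot> si t" using b mem_D by blast
    obtain a where a: "eS a = si s \<cdot> s" "lam s a = b" using lam_surj[of b s] s(2) alpha_eS[of b] by auto
    have "si s \<cdot> t \<in> Ginv x \<otimes> (x \<otimes> y)"
      using S.GS_mult_mem[OF S.G.inv_closed[OF x] S.G.m_closed[OF x y] S.GS_inv_mem[OF x s(1)] t(1)] .
    then have q: "si s \<cdot> t \<in> y" using x y by (simp add: S.G.m_assoc[symmetric] S.G.l_inv)
    have "si s \<cdot> t \<cdot> si (si s \<cdot> t) = si s \<cdot> (t \<cdot> si t) \<cdot> s" by (simp add: S.iv_mult)
    also have "\<dots> = si s \<cdot> (s \<cdot> si s) \<cdot> s" using s(2) t(2) by (simp only:)
    finally have "eS a = si s \<cdot> t \<cdot> si (si s \<cdot> t)" using a(1) by simp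
    then have "a \<in> D y" using mem_DI q by blast
    moreover have "a \<in> D (Ginv x)" using mem_D_inv[OF x] s(1) a(1) by blast
    ultimately show "b \<in> \<theta> x ` (D (Ginv x) \<inter> D y)"
      using theta_eq[OF x s(1) a(1)] a(2) by (intro image_eqI[of _ _ a]) auto
  qed
qed

section \<open>The twisting multipliers \<open>w\<^sub>x\<^sub>,\<^sub>y\<close>\<close>

abbreviation w where "w \<equiv> wmap mS mA \<alpha> f"
abbreviation W where "W \<equiv> wfactor mS mA \<alpha> f"

lemma eS_mult_same: "eps b = eps a \<Longrightarrow> eS (a \<odot> b) = eS a"
proof -
  assume "eps b = eps a"
  then have "eS b = eS a" by (simp add: eS_def)
  then show ?thesis using eS_in_idems[of a] by (simp add: eS_mult S.idem_iff)
qed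

lemma wfactor_eq:
  assumes x: "x \<in> carrier GG" and y: "y \<in> carrier GG" and s: "s \<in> x" and t: "t \<in> x \<otimes> y"
    and as: "eS a = s \<cdot> si s" and at: "eS a = t \<cdot> si t"
  shows "W x y a = f s (si s \<cdot> t)"
proof -
  have "(THE u. u \<in> x \<and> \<alpha> (u \<cdot> si u) = eps a) = s"
  proof (rule the_equality)
    show "s \<in> x \<and> \<alpha> (s \<cdot> si s) = eps a" using s as alpha_eS[of a] by simp
    fix u assume u: "u \<in> x \<and> \<alpha> (u \<cdot> si u) = eps a"
    then have "u \<cdot> si u = s \<cdot> si s" using as eS_iff[of "u \<cdot> si u" a] by simp
    then show "u = s" using S.class_eq_if_range_eq[OF x] u s by blast
  qed
  moreover have "(THE u. u \<in> x \<otimes> y \<and> \<alpha> (u \<cdot> si u) = eps a) = t"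
  proof (rule the_equality)
    show "t \<in> x \<otimes> y \<and> \<alpha> (t \<cdot> si t) = eps a" using t at alpha_eS[of a] by simp
    fix u assume u: "u \<in> x \<otimes> y \<and> \<alpha> (u \<cdot> si u) = eps a"
    then have "u \<cdot> si u = t \<cdot> si t" using at eS_iff[of "u \<cdot> si u" a] by simp
    then show "u = t" using S.class_eq_if_range_eq[OF S.G.m_closed[OF x y]] u t by blast
  qed
  ultimately show ?thesis unfolding wfactor_def A.eps_def[symmetric] Let_def by simp
qed

lemma w_eq:
  assumes "x \<in> carrier GG" "y \<in> carrier GG" "s \<in> x" "t \<in> x \<otimes> y" "eS a = s \<cdot> si s" "eS a = t \<cdot> si t"
  shows "fst (w x y) a = f s (si s \<cdot> t) \<odot> a" and "snd (w x y) a = a \<odot> f s (si s \<cdot> t)"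
  using wfactor_eq[OF assms] by (simp_all add: wmap_def)

lemma wfactor_witness:
  assumes x: "x \<in> carrier GG" and y: "y \<in> carrier GG" and a: "a \<in> D x \<inter> D (x \<otimes> y)"
  obtains s t where "s \<in> x" "t \<in> x \<otimes> y" "eS a = s \<cdot> si s" "eS a = t \<cdot> si t" "W x y a = f s (si s \<cdot> t)"
proof -
  obtain s where "s \<in> x" "eS a = s \<cdot> si s" using a mem_D by blast
  moreover obtain t where "t \<in> x \<otimes> y" "eS a = t \<cdot> si t" using a mem_D by blast
  ultimately show thesis using that wfactor_eq[OF x y] by blast
qed

lemma eps_wfactor:
  assumes x: "x \<in> carrier GG" and y: "y \<in> carrier GG" and a: "a \<in> D x \<inter> D (x \<otimes> y)"
  shows "eps (W x y a) = eps a"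
proof -
  obtain s t where st: "s \<in> x" "t \<in> x \<otimes> y" "eS a = s \<cdot> si s" "eS a = t \<cdot> si t" "W x y a = f s (si s \<cdot> t)"
    using wfactor_witness[OF x y a] .
  let ?g = "eS a"
  have hs: "s \<cdot> si s = ?g" "s \<cdot> (si s \<cdot> z) = ?g \<cdot> z" for z unfolding st(3) by simp_all
  have ht: "t \<cdot> si t = ?g" "t \<cdot> (si t \<cdot> z) = ?g \<cdot> z" for z unfolding st(4) by simp_all
  have "eps (W x y a) = \<alpha> (?g \<cdot> (?g \<cdot> ?g))" unfolding st(5) eps_f by (simp add: S.iv_mult hs ht)
  then show ?thesis using S.idem_iff[THEN iffD1, OF eS_in_idems[of a]] by simp
qed

text \<open>Restricting \<open>a\<close> to a smaller idempotent only restricts its twisting factor: the witnesses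
  for \<open>b\<close> are the restrictions \<open>g' s\<close> and \<open>g' t\<close> of those for \<open>a\<close>.\<close>
lemma wfactor_restrict:
  assumes x: "x \<in> carrier GG" and y: "y \<in> carrier GG"
    and a: "a \<in> D x \<inter> D (x \<otimes> y)" and b: "b \<in> D x \<inter> D (x \<otimes> y)" and le: "eS b \<cdot> eS a = eS b"
  shows "W x y b = \<alpha> (eS b) \<odot> W x y a"
proof -
  have xy: "x \<otimes> y \<in> carrier GG" using S.G.m_closed[OF x y] .
  obtain s t where st: "s \<in> x" "t \<in> x \<otimes> y" "eS a = s \<cdot> si s" "eS a = t \<cdot> si t" "W x y a = f s (si s \<cdot> t)"
    using wfactor_witness[OF x y a] .
  obtain s' t' where st': "s' \<in> x" "t' \<in> x \<otimes> y" "eS b = s' \<cdot> si s'" "eS b = t' \<cdot> si t'"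
    "W x y b = f s' (si s' \<cdot> t')"
    using wfactor_witness[OF x y b] .
  define g where "g = eS a"
  define g' where "g' = eS b"
  have gE: "g \<in> ES" and g'E: "g' \<in> ES" unfolding g_def g'_def by simp_all
  have hs: "s \<cdot> si s = g" "s \<cdot> (si s \<cdot> z) = g \<cdot> z" for z unfolding g_def st(3) by simp_all
  have ht: "t \<cdot> si t = g" "t \<cdot> (si t \<cdot> z) = g \<cdot> z" for z unfolding g_def st(4) by simp_all
  have gg: "g \<cdot> g = g" "g \<cdot> (g \<cdot> z) = g \<cdot> z" for z
    using S.idem_iff[THEN iffD1, OF gE] S.idem_absorb[OF gE] by simp_all
  have g'g': "g' \<cdot> g' = g'" "g' \<cdot> (g' \<cdot> z) = g' \<cdot> z" for z
    using S.idem_iff[THEN iffD1, OF g'E] S.idem_absorb[OF g'E] by simp_all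
  have c1: "g' \<cdot> g = g'" "g' \<cdot> (g \<cdot> z) = g' \<cdot> z" for z
    using le S.assoc_subst[OF le] unfolding g_def g'_def by simp_all
  have c2: "g \<cdot> g' = g'" "g \<cdot> (g' \<cdot> z) = g' \<cdot> z" for z
    using c1(1) S.idem_comm[OF gE g'E] S.assoc_subst[of g g' g'] by simp_all
  note R = hs ht gg g'g' c1 c2 S.iv_idem[OF g'E] S.iv_mult
  have s': "s' = g' \<cdot> s"
    by (rule S.class_eq_restrict[OF x st(1) st'(1) g'E]) (simp add: hs c1, simp add: st'(3) g'_def)
  have t': "t' = g' \<cdot> t"
    by (rule S.class_eq_restrict[OF xy st(2) st'(2) g'E]) (simp add: ht c1, simp add: st'(4) g'_def)
  define e where "e = si t \<cdot> g' \<cdot> t"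
  have eE: "e \<in> ES" unfolding e_def using S.conj_idem[OF g'E, of "si t"] by simp
  have "si s' \<cdot> t' = si s \<cdot> t \<cdot> e" unfolding s' t' e_def by (simp add: R)
  then have "W x y b = f (g' \<cdot> s) (si s \<cdot> t \<cdot> e)" using st'(5) s' by simp
  also have "\<dots> = \<alpha> g' \<odot> f s (si s \<cdot> t \<cdot> e)"
    by (rule f_idem_mult_left[OF g'E])
  also have "\<dots> = \<alpha> g' \<odot> (\<alpha> (s \<cdot> (si s \<cdot> t) \<cdot> e \<cdot> si (si s \<cdot> t) \<cdot> si s) \<odot> f s (si s \<cdot> t))"
    by (simp only: f_mult_idem_right[OF eE, of s "si s \<cdot> t"])
  also have "s \<cdot> (si s \<cdot> t) \<cdot> e \<cdot> si (si s \<cdot> t) \<cdot> si s = g'" unfolding e_def by (simp add: R)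
  finally show ?thesis using g'E st(5) by (simp add: g'_def)
qed

lemma compatible_units_wfactor:
  assumes x: "x \<in> carrier GG" and y: "y \<in> carrier GG"
  shows "A.compatible_units (D x \<inter> D (x \<otimes> y)) (W x y)"
  unfolding A.compatible_units_def
proof (intro conjI ballI impI)
  fix a b assume a: "a \<in> D x \<inter> D (x \<otimes> y)" and b: "b \<in> D x \<inter> D (x \<otimes> y)"
    and le: "eps b \<odot> eps a = eps b"
  have "\<alpha> (eS b \<cdot> eS a) = \<alpha> (eS b)" using le by (simp add: alpha_mult)
  then have "eS b \<cdot> eS a = eS b" using alpha_inj S.idem_mult_closed eS_in_idems by blast
  then show "W x y b = eps b \<odot> W x y a" using wfactor_restrict[OF x y a b] by simp
qed (rule eps_wfactor[OF x y])

lemma D_inter_ideal: "x \<in> carrier GG \<Longrightarrow> y \<in> carrier GG \<Longrightarrow> a \<in> D x \<inter> D y \<Longrightarrow>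
    a \<odot> b \<in> D x \<inter> D y \<and> b \<odot> a \<in> D x \<inter> D y"
  using D_ideal by blast

lemma unit_multiplier_w:
  assumes x: "x \<in> carrier GG" and y: "y \<in> carrier GG"
  shows "unit_multiplier mA (setmul mA (D x) (D (x \<otimes> y))) (w x y)"
  unfolding setmul_D[OF x S.G.m_closed[OF x y]] wmap_def
  by (rule A.unit_multiplier_compatible_units[OF D_inter_ideal compatible_units_wfactor])
    (use x y S.G.m_closed in auto)

lemma mltp_inv_w:
  assumes x: "x \<in> carrier GG" and y: "y \<in> carrier GG" and c: "c \<in> D x \<inter> D (x \<otimes> y)"
  shows "snd (mltp_inv mA (setmul mA (D x) (D (x \<otimes> y))) (w x y)) c = c \<odot> ai (W x y c)"
  unfolding setmul_D[OF x S.G.m_closed[OF x y]] wmap_def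
  by (rule A.mltp_inv_compatible_units[OF D_inter_ideal compatible_units_wfactor c])
    (use x y S.G.m_closed in auto)

section \<open>The twisted partial action \<open>\<Theta>\<close>\<close>

lemma mltp_inv_w_fst:
  assumes x: "x \<in> carrier GG" and y: "y \<in> carrier GG" and d: "d \<in> D x \<inter> D (x \<otimes> y)"
  shows "snd (mltp_inv mA (setmul mA (D x) (D (x \<otimes> y))) (w x y)) (fst (w x y) d) =
    W x y d \<odot> d \<odot> ai (W x y d)"
proof -
  let ?F = "W x y d"
  have Fd: "?F \<odot> d \<in> D x \<inter> D (x \<otimes> y)" using d D_ideal x S.G.m_closed[OF x y] by blast
  have "eps ?F = eps d" using eps_wfactor[OF x y d] .
  then have "W x y (?F \<odot> d) = ?F"
    using A.compatible_units_eq[OF compatible_units_wfactor[OF x y] d Fd] by (simp add: A.eps_mult)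
  then show ?thesis using mltp_inv_w[OF x y Fd] by (simp add: wmap_def)
qed

lemma theta_theta:
  assumes x: "x \<in> carrier GG" and y: "y \<in> carrier GG"
    and c: "c \<in> setmul mA (D (Ginv y)) (D (Ginv y \<otimes> Ginv x))"
  shows "\<theta> x (\<theta> y c) =
    snd (mltp_inv mA (setmul mA (D x) (D (x \<otimes> y))) (w x y)) (fst (w x y) (\<theta> (x \<otimes> y) c))"
proof -
  have xy: "x \<otimes> y \<in> carrier GG" using S.G.m_closed[OF x y] .
  have cy: "c \<in> D (Ginv y)" and cxy: "c \<in> D (Ginv (x \<otimes> y))"
    using c setmul_D[OF S.G.inv_closed[OF y] S.G.m_closed[OF S.G.inv_closed[OF y] S.G.inv_closed[OF x]]]
    by (auto simp: S.G.inv_mult_group[OF x y])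
  obtain t where t: "t \<in> y" "eS c = si t \<cdot> t" "\<theta> y c = lam t c" "eS (\<theta> y c) = t \<cdot> si t"
    using theta_witness[OF y cy] .
  obtain v where
    v: "v \<in> x \<otimes> y" "eS c = si v \<cdot> v" "\<theta> (x \<otimes> y) c = lam v c" "eS (\<theta> (x \<otimes> y) c) = v \<cdot> si v"
    using theta_witness[OF xy cxy] .
  define u where "u = v \<cdot> si t"
  have ux: "u \<in> x" unfolding u_def
    using S.GS_mult_mem[OF xy S.G.inv_closed[OF y] v(1) S.GS_inv_mem[OF y t(1)]] x y
    by (simp add: S.G.m_assoc S.G.r_inv)
  have "si v \<cdot> v = si t \<cdot> t" using t(2) v(2) by simp
  note u = S.mult_iv_domain_eq[OF this, folded u_def]
  have d: "\<theta> (x \<otimes> y) c \<in> D x \<inter> D (x \<otimes> y)" using mem_DI[OF ux] mem_DI[OF v(1)] v(4) u(3) by auto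
  have "\<theta> x (\<theta> y c) = lam u (lam t c)" using theta_eq[OF x ux, of "\<theta> y c"] t(3,4) u(2) by simp
  also have "\<dots> = f u t \<odot> \<theta> (x \<otimes> y) c \<odot> ai (f u t)" unfolding lam_lam u(1) v(3) ..
  also have "f u t = W x y (\<theta> (x \<otimes> y) c)"
    using wfactor_eq[OF x y ux v(1)] v(4) u(3,4) by simp
  finally show ?thesis using mltp_inv_w_fst[OF x y d] by simp
qed

lemma w_one_left: "x \<in> carrier GG \<Longrightarrow> mltp_eq (D x) (w \<one>\<^bsub>GG\<^esub> x) (id, id)"
  unfolding mltp_eq_def
proof (intro ballI)
  fix a assume x: "x \<in> carrier GG" and a: "a \<in> D x"
  define g where "g = eS a"
  have gE: "g \<in> ES" by (simp add: g_def)
  obtain t where t: "t \<in> x" "g = t \<cdot> si t" using a mem_D unfolding g_def by blast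
  have gg: "g \<cdot> si g = g" using S.iv_idem[OF gE] S.idem_iff[THEN iffD1, OF gE] by simp
  have "W \<one>\<^bsub>GG\<^esub> x a = f g (si g \<cdot> t)"
  proof (rule wfactor_eq[OF S.G.one_closed x])
    show "g \<in> \<one>\<^bsub>GG\<^esub>" using gE by (simp add: S.GS_one)
    show "t \<in> \<one>\<^bsub>GG\<^esub> \<otimes> x" using t(1) x by simp
    show "eS a = g \<cdot> si g" "eS a = t \<cdot> si t" using gg t(2) by (simp_all add: g_def)
  qed
  also have "\<dots> = \<alpha> g" using f_idem_left[OF gE, of t] S.iv_idem[OF gE] t(2) S.idem_iff[THEN iffD1, OF gE]
    by simp
  finally have "W \<one>\<^bsub>GG\<^esub> x a = eps a" unfolding g_def by simp
  then show "fst (w \<one>\<^bsub>GG\<^esub> x) a = fst (id, id) a \<and> snd (w \<one>\<^bsub>GG\<^esub> x) a = snd (id, id) a"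
    by (simp add: wmap_def)
qed

lemma w_one_right: "x \<in> carrier GG \<Longrightarrow> mltp_eq (D x) (w x \<one>\<^bsub>GG\<^esub>) (id, id)"
  unfolding mltp_eq_def
proof (intro ballI)
  fix a assume x: "x \<in> carrier GG" and a: "a \<in> D x"
  obtain s where s: "s \<in> x" "eS a = s \<cdot> si s" using a mem_D by blast
  have "W x \<one>\<^bsub>GG\<^esub> a = f s (si s \<cdot> s)"
    using wfactor_eq[OF x S.G.one_closed s(1) _ s(2) s(2)] s(1) x by simp
  also have "\<dots> = \<alpha> (s \<cdot> si s)" using f_idem_right[of "si s \<cdot> s" s] by simp
  also have "\<dots> = eps a" using s(2) alpha_eS[of a] by simp
  finally show "fst (w x \<one>\<^bsub>GG\<^esub>) a = fst (id, id) a \<and> snd (w x \<one>\<^bsub>GG\<^esub>) a = snd (id, id) a"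
    by (simp add: wmap_def)
qed

lemma w_snd_lam:
  assumes x: "x \<in> carrier GG" and y: "y \<in> carrier GG" and p: "p \<in> x" and q: "q \<in> y"
    and bp: "eS b = si p \<cdot> p" and bq: "eS b = q \<cdot> si q"
  shows "snd (w x y) (lam p b) = lam p b \<odot> f p q"
proof -
  have pq: "si p \<cdot> (p \<cdot> z) = q \<cdot> (si q \<cdot> z)" for z
    using bp bq by (metis S.assoc)
  have "eS (lam p b) = p \<cdot> si p" using eS_lam[OF bp] .
  moreover have "p \<cdot> q \<cdot> si (p \<cdot> q) = p \<cdot> si p" by (simp add: S.iv_mult pq[symmetric])
  moreover have "si p \<cdot> (p \<cdot> q) = q" by (simp add: pq)
  ultimately show ?thesis using w_eq(2)[OF x y p S.GS_mult_mem[OF x y p q]] by simp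
qed

text \<open>With witnesses \<open>p \<in> x\<close>, \<open>q \<in> y\<close>, \<open>r \<in> y z\<close> of \<open>c\<close>, both sides of the cocycle condition for \<open>w\<close>
  reduce to the two sides of the cocycle identity for \<open>f\<close> at \<open>(p, q, q\<inverse>r)\<close>, multiplied by \<open>\<lambda>\<^sub>p(c)\<close>.\<close>
lemma w_cocycle_witnesses:
  assumes x: "x \<in> carrier GG" and y: "y \<in> carrier GG" and z: "z \<in> carrier GG"
    and p: "p \<in> x" "eS c = si p \<cdot> p" and q: "q \<in> y" "eS c = q \<cdot> si q" and r: "r \<in> y \<otimes> z" "eS c = r \<cdot> si r"
  shows "snd (w x (y \<otimes> z)) (\<theta> x (snd (w y z) c)) = snd (w (x \<otimes> y) z) (snd (w x y) (\<theta> x c))"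
proof -
  have yz: "y \<otimes> z \<in> carrier GG" and xy: "x \<otimes> y \<in> carrier GG" using S.G.m_closed x y z by auto
  define g where "g = eS c"
  have gg: "g \<cdot> g = g" using eS_in_idems[of c] S.idem_iff unfolding g_def by blast
  have Rp: "si p \<cdot> (p \<cdot> u) = g \<cdot> u" for u unfolding g_def p(2) by simp
  have Rq: "q \<cdot> (si q \<cdot> u) = g \<cdot> u" for u unfolding g_def q(2) by simp
  have Rr: "r \<cdot> (si r \<cdot> u) = g \<cdot> u" for u unfolding g_def r(2) by simp
  have gr: "g \<cdot> r = r" unfolding g_def r(2) by simp
  have pg: "p \<cdot> (g \<cdot> u) = p \<cdot> u" for u unfolding g_def p(2) by simp
  define Q where "Q = f q (si q \<cdot> r)"
  have "eps Q = \<alpha> g" unfolding Q_def eps_f by (simp add: S.iv_mult Rq Rr q(2)[folded g_def, symmetric] gg)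
  then have cQ: "eS (c \<odot> Q) = g" unfolding g_def by (simp add: eS_mult_same)
  have "snd (w x (y \<otimes> z)) (\<theta> x (snd (w y z) c)) = snd (w x (y \<otimes> z)) (lam p (c \<odot> Q))"
    using w_eq(2)[OF y z q(1) r(1) q(2) r(2)] theta_eq[OF x p(1)] cQ p(2) unfolding Q_def g_def by simp
  also have "\<dots> = lam p c \<odot> (lam p Q \<odot> f p r)"
    using w_snd_lam[OF x yz p(1) r(1), of "c \<odot> Q"] cQ p(2) r(2) unfolding g_def by (simp add: lam_mult)
  also have "lam p Q \<odot> f p r = f p q \<odot> f (p \<cdot> q) (si q \<cdot> r)"
    using cocycle[of p q "si q \<cdot> r"] unfolding Q_def by (simp add: Rq gr)
  also have "lam p c \<odot> (f p q \<odot> f (p \<cdot> q) (si q \<cdot> r)) = snd (w (x \<otimes> y) z) (lam p c \<odot> f p q)"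
  proof -
    have "eps (f p q) = eps (lam p c)"
      unfolding eps_lam eps_f p(2) by (simp add: S.iv_mult Rq pg flip: g_def)
    then have "eS (lam p c \<odot> f p q) = p \<cdot> si p" using eS_mult_same eS_lam[OF p(2)] by simp
    moreover have "p \<cdot> q \<cdot> si (p \<cdot> q) = p \<cdot> si p" "p \<cdot> r \<cdot> si (p \<cdot> r) = p \<cdot> si p"
      by (simp_all add: S.iv_mult Rq Rr pg)
    moreover have "p \<cdot> r \<in> x \<otimes> y \<otimes> z" using S.GS_mult_mem[OF x yz p(1) r(1)] x y z by (simp add: S.G.m_assoc)
    ultimately show ?thesis
      using w_eq(2)[OF xy z S.GS_mult_mem[OF x y p(1) q(1)], of "p \<cdot> r" "lam p c \<odot> f p q"]
      by (simp add: S.iv_mult Rp gr)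
  qed
  also have "lam p c \<odot> f p q = snd (w x y) (\<theta> x c)"
    using w_snd_lam[OF x y p(1) q(1) p(2) q(2)] theta_eq[OF x p(1) p(2)] by simp
  finally show ?thesis by simp
qed

lemma w_cocycle:
  assumes x: "x \<in> carrier GG" and y: "y \<in> carrier GG" and z: "z \<in> carrier GG"
    and c: "c \<in> setmul mA (setmul mA (D (Ginv x)) (D y)) (D (y \<otimes> z))"
  shows "snd (w x (y \<otimes> z)) (\<theta> x (snd (w y z) c)) = snd (w (x \<otimes> y) z) (snd (w x y) (\<theta> x c))"
proof -
  have yz: "y \<otimes> z \<in> carrier GG" using S.G.m_closed y z by auto
  have "setmul mA (D (Ginv x)) (D y) = D (Ginv x) \<inter> D y" using setmul_D[OF S.G.inv_closed[OF x] y] .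
  moreover have "setmul mA (D (Ginv x) \<inter> D y) (D (y \<otimes> z)) = D (Ginv x) \<inter> D y \<inter> D (y \<otimes> z)"
    by (rule A.setmul_ideals_eq_inter) (use D_ideal S.G.inv_closed x y yz in blast)+
  ultimately have "c \<in> D (Ginv x)" "c \<in> D y" "c \<in> D (y \<otimes> z)" using c by auto
  then obtain p q r where "p \<in> x" "eS c = si p \<cdot> p" "q \<in> y" "eS c = q \<cdot> si q" "r \<in> y \<otimes> z" "eS c = r \<cdot> si r"
    using mem_D_inv[OF x] mem_D by meson
  then show ?thesis by (rule w_cocycle_witnesses[OF x y z])
qed

theorem twisted_partial_action:
  "twisted_partial_action GG mA D \<theta> w"
  unfolding twisted_partial_action_def iso_on_def bij_betw_def sg_ideal_def
proof (intro conjI ballI allI)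
  fix x assume x: "x \<in> carrier GG"
  show "D x \<noteq> {}" by (rule D_nonempty[OF x])
  show "\<And>a b. a \<in> D x \<Longrightarrow> a \<odot> b \<in> D x" "\<And>a b. a \<in> D x \<Longrightarrow> b \<odot> a \<in> D x"
    using D_ideal[OF x] by blast+
  show "inj_on (\<theta> x) (D (Ginv x))" by (rule theta_inj[OF x])
  show "\<theta> x ` D (Ginv x) = D x" using theta_into[OF x] theta_surj[OF x] by blast
  show "\<And>a b. a \<in> D (Ginv x) \<Longrightarrow> b \<in> D (Ginv x) \<Longrightarrow> \<theta> x (a \<odot> b) = \<theta> x a \<odot> \<theta> x b"
    by (rule theta_mult[OF x])
  show "setmul mA (D x) (D x) = D x" using setmul_D[OF x x] by simp
  show "mltp_eq (D x) (w \<one>\<^bsub>GG\<^esub> x) (id, id)" "mltp_eq (D x) (w x \<one>\<^bsub>GG\<^esub>) (id, id)"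
    using w_one_left[OF x] w_one_right[OF x] .
  fix y assume y: "y \<in> carrier GG"
  show "unit_multiplier mA (setmul mA (D x) (D (x \<otimes> y))) (w x y)" by (rule unit_multiplier_w[OF x y])
  show "setmul mA (D x) (D y) = setmul mA (D y) (D x)" using setmul_D[OF x y] setmul_D[OF y x] by blast
  show "\<theta> x ` setmul mA (D (Ginv x)) (D y) = setmul mA (D x) (D (x \<otimes> y))"
    using theta_image[OF x y] setmul_D S.G.inv_closed S.G.m_closed x y by simp
  show "\<And>c. c \<in> setmul mA (D (Ginv y)) (D (Ginv y \<otimes> Ginv x)) \<Longrightarrow> \<theta> x (\<theta> y c) =
      snd (mltp_inv mA (setmul mA (D x) (D (x \<otimes> y))) (w x y)) (fst (w x y) (\<theta> (x \<otimes> y) c))"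
    by (rule theta_theta[OF x y])
  fix z assume z: "z \<in> carrier GG"
  show "\<And>c. c \<in> setmul mA (setmul mA (D (Ginv x)) (D y)) (D (y \<otimes> z)) \<Longrightarrow>
      snd (w x (y \<otimes> z)) (\<theta> x (snd (w y z) c)) = snd (w (x \<otimes> y) z) (snd (w x y) (\<theta> x c))"
    by (rule w_cocycle[OF x y z])
qed (simp_all add: S.group_GS D_one theta_one)

section \<open>Equivalence of the crossed products\<close>

lemma mem_cpL_carrier: "(a, s) \<in> cpL_carrier mS mA \<alpha> \<longleftrightarrow> eS a = s \<cdot> si s"
  by (simp add: cpL_carrier_def eS_iff)

lemma mem_cpT_carrier: "(a, x) \<in> cpT_carrier GG D \<longleftrightarrow> x \<in> carrier GG \<and> a \<in> D x"
  by (simp add: cpT_carrier_def)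

lemma theta_inv_lam:
  assumes x: "x \<in> carrier GG" and s: "s \<in> x" and a: "eS a = si s \<cdot> s"
  shows "the_inv_into (D (Ginv x)) (\<theta> x) (lam s a) = a"
proof -
  have "a \<in> D (Ginv x)" using mem_D_inv[OF x] s a by blast
  then show ?thesis using the_inv_into_f_f[OF theta_inj[OF x]] theta_eq[OF x s a] by metis
qed

text \<open>The witness of \<open>a \<odot> b\<close> is \<open>s (eS b)\<close>, and \<open>\<alpha>(eS b)\<close> is absorbed by \<open>b\<close>.\<close>
lemma theta_mult_right:
  assumes x: "x \<in> carrier GG" and s: "s \<in> x" and a: "eS a = si s \<cdot> s"
  shows "\<theta> x (a \<odot> b) = lam s (a \<odot> b)"
proof -
  have "si (s \<cdot> eS b) \<cdot> (s \<cdot> eS b) = eS (a \<odot> b)"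
    unfolding S.domain_mult_idem[OF eS_in_idems] eS_mult a ..
  then have "\<theta> x (a \<odot> b) = lam (s \<cdot> eS b) (a \<odot> b)"
    using theta_eq[OF x S.class_idem_mult_right[OF x s eS_in_idems]] by simp
  also have "\<dots> = lam s (a \<odot> (eps b \<odot> b))"
    by (simp add: lam_mult_idem_right A.central_left_commute)
  finally show ?thesis by simp
qed

lemma cpT_mult_classes:
  assumes a: "(a, s) \<in> cpL_carrier mS mA \<alpha>" and b: "(b, t) \<in> cpL_carrier mS mA \<alpha>"
  shows "cpT_mult GG mA D \<theta> w (a, S.cls s) (b, S.cls t) = (a \<odot> lam s b \<odot> f s t, S.cls (s \<cdot> t))"
proof -
  let ?x = "S.cls s" and ?y = "S.cls t"
  have ea: "eps a = \<alpha> (s \<cdot> si s)" and eb: "eS b = t \<cdot> si t"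
    using a b by (simp_all add: mem_cpL_carrier eS_iff)
  obtain a' where a': "eS a' = si s \<cdot> s" "lam s a' = a" using lam_surj[OF ea] by blast
  have inv: "the_inv_into (D (Ginv ?x)) (\<theta> ?x) a = a'"
    using theta_inv_lam[OF S.sigma_class_in_carrier S.self_in_sigma_class a'(1)] a'(2) by simp
  have "\<theta> ?x (a' \<odot> b) = a \<odot> lam s b"
    using theta_mult_right[OF S.sigma_class_in_carrier S.self_in_sigma_class a'(1)] a'(2) by (simp add: lam_mult)
  moreover have "W ?x ?y (a \<odot> lam s b) = f s t"
  proof -
    define e where "e = t \<cdot> si t"
    have eE: "e \<in> ES" unfolding e_def by simp
    have "eS (lam s b) = s \<cdot> e \<cdot> si s"
      using eS_iff[OF S.conj_idem[OF eE, of s]] eps_lam[of s b] eb unfolding e_def by simp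
    then have ec: "eS (a \<odot> lam s b) = s \<cdot> e \<cdot> si s" using a by (simp add: mem_cpL_carrier eS_mult)
    have "W ?x ?y (a \<odot> lam s b) = f (s \<cdot> e) (si (s \<cdot> e) \<cdot> (s \<cdot> t))"
    proof (rule wfactor_eq)
      show "s \<cdot> e \<in> ?x" using S.class_idem_mult_right[OF S.sigma_class_in_carrier S.self_in_sigma_class eE] .
      show "s \<cdot> t \<in> ?x \<otimes> ?y" by (simp add: S.GS_mult)
      show "eS (a \<odot> lam s b) = s \<cdot> e \<cdot> si (s \<cdot> e)" using ec S.range_mult_idem[OF eE] by simp
      show "eS (a \<odot> lam s b) = s \<cdot> t \<cdot> si (s \<cdot> t)" using ec by (simp add: e_def S.iv_mult)
    qed simp_all
    moreover have "si (s \<cdot> e) \<cdot> (s \<cdot> t) = si s \<cdot> (s \<cdot> t)"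
    proof -
      have "si (s \<cdot> e) \<cdot> (s \<cdot> t) = e \<cdot> (si s \<cdot> s) \<cdot> t" by (simp add: S.iv_mult S.iv_idem[OF eE])
      also have "\<dots> = si s \<cdot> s \<cdot> (e \<cdot> t)" using S.idem_comm[OF eE S.iv_mult_idem] by simp
      finally show ?thesis by (simp add: e_def)
    qed
    ultimately show ?thesis using f_restrict_domains by (simp add: e_def)
  qed
  ultimately show ?thesis
    unfolding cpT_mult_def by (simp add: inv S.GS_mult wmap_def)
qed

lemma bij_crossed_products: "bij_betw (map_prod id S.cls) (cpL_carrier mS mA \<alpha>) (cpT_carrier GG D)"
proof (rule bij_betw_imageI)
  show "inj_on (map_prod id S.cls) (cpL_carrier mS mA \<alpha>)"
  proof (rule inj_onI)
    fix u v assume u: "u \<in> cpL_carrier mS mA \<alpha>" and v: "v \<in> cpL_carrier mS mA \<alpha>"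
      and eq: "map_prod id S.cls u = map_prod id S.cls v"
    obtain a s b t where uv: "u = (a, s)" "v = (b, t)" by fastforce
    then have "a = b" and "S.sg s t" using eq by (auto simp: S.sigma_class_eq_iff)
    moreover have "s \<cdot> si s = t \<cdot> si t" using u v uv \<open>a = b\<close> by (simp add: mem_cpL_carrier)
    ultimately show "u = v" using S.sigma_eq_if_range_eq uv by simp
  qed
  show "map_prod id S.cls ` cpL_carrier mS mA \<alpha> = cpT_carrier GG D"
  proof (intro equalityI subsetI)
    fix u assume "u \<in> map_prod id S.cls ` cpL_carrier mS mA \<alpha>"
    then obtain a s where "(a, s) \<in> cpL_carrier mS mA \<alpha>" "u = (a, S.cls s)" by auto
    then show "u \<in> cpT_carrier GG D"
      using mem_DI[of s "S.cls s" a] by (simp add: mem_cpL_carrier mem_cpT_carrier)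
  next
    fix u assume "u \<in> cpT_carrier GG D"
    then obtain a x s where "u = (a, x)" "x \<in> carrier GG" "s \<in> x" "eS a = s \<cdot> si s"
      using mem_D by (cases u) (auto simp: mem_cpT_carrier)
    then show "u \<in> map_prod id S.cls ` cpL_carrier mS mA \<alpha>"
      using S.carrier_GS_eq_class by (auto simp: mem_cpL_carrier intro!: image_eqI[of _ _ "(a, s)"])
  qed
qed

theorem crossed_products_equivalent:
  "equiv_ext (cpL_carrier mS mA \<alpha>) (cpL_mult mS mA lam f) (cpL_i mS mA \<alpha>) (cpL_j mS)
     (cpT_carrier GG D) (cpT_mult GG mA D \<theta> w) (cpT_i GG) cpT_j"
  unfolding equiv_ext_def
proof (intro exI[of _ "map_prod id S.cls"] conjI ballI allI bij_crossed_products)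
  fix u v assume "u \<in> cpL_carrier mS mA \<alpha>" and "v \<in> cpL_carrier mS mA \<alpha>"
  moreover obtain a s b t where "u = (a, s)" "v = (b, t)" by fastforce
  ultimately show "map_prod id S.cls (cpL_mult mS mA lam f u v) =
      cpT_mult GG mA D \<theta> w (map_prod id S.cls u) (map_prod id S.cls v)"
    using cpT_mult_classes by (simp add: cpL_mult_def)
next
  fix a
  show "map_prod id S.cls (cpL_i mS mA \<alpha> a) = cpT_i GG a"
    using S.sigma_class_idem_eq_one[OF eS_in_idems[of a]] by (simp add: cpL_i_def cpT_i_def eS_def)
qed (simp add: cpT_j_def cpL_j_def)

end

theorem proposition6p11:
  fixes mS :: "'s \<Rightarrow> 's \<Rightarrow> 's" and mA :: "'a \<Rightarrow> 'a \<Rightarrow> 'a"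
    and \<alpha> :: "'s \<Rightarrow> 'a" and lam :: "'s \<Rightarrow> 'a \<Rightarrow> 'a" and f :: "'s \<Rightarrow> 's \<Rightarrow> 'a"
  assumes "inverse_semigroup mS" and "E_unitary mS"
    and "semilattice_of_groups mA"
    and "sieben_twisted_module mS mA \<alpha> lam f"
  shows "twisted_partial_action (GS mS) mA (Dmap mS mA \<alpha>) (thetamap mS mA \<alpha> lam) (wmap mS mA \<alpha> f)
     \<and> equiv_ext (cpL_carrier mS mA \<alpha>) (cpL_mult mS mA lam f) (cpL_i mS mA \<alpha>) (cpL_j mS)
         (cpT_carrier (GS mS) (Dmap mS mA \<alpha>))
         (cpT_mult (GS mS) mA (Dmap mS mA \<alpha>) (thetamap mS mA \<alpha> lam) (wmap mS mA \<alpha> f))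
         (cpT_i (GS mS)) cpT_j"
proof -
  interpret sieben_module mS mA \<alpha> lam f
    using assms by unfold_locales (auto simp: semilattice_of_groups_def)
  show ?thesis using twisted_partial_action crossed_products_equivalent by blast
qed

end
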